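(* Let $\epsilon\ge0$ and consider the eigenvalue problem $$L_0\Psi=\Phi,\qquad \Phi'+\frac{\epsilon}{1-x^2}\Phi=\mu\,\Psi',\qquad -1<x<1,$$ for $\Psi$ in the space $X$. If $0\le\epsilon<2$, the complete spectrum consists of simple isolated eigenvalues $\mu=\mu_n=-n(n+1)$, $n=0,1,2,\dots$. If $\epsilon\ge2$, the problem has no nonzero eigenvalues in $X$.
   Context: $L_0=\frac{d}{dx}\left[(1-x^2)\frac{d}{dx}\right]$. ${\cal H}_0([-1,1])$ is the space of functions with $\int_{-1}^{1}(1-x^2)|\Psi'(x)|^2dx<\infty$, and $X=\{\Psi\in{\cal H}_0([-1,1]):\ \lim_{x\to\pm1}(1-x^2)\Psi'(x)=0\}$. $\Psi$ is determined up to an additive constant (constants give the eigenvalue $\mu=0$). A number $\mu\in\mathbb{C}$ is an eigenvalue if there is a nonzero $\Psi\in X$ solving the system classically on $(-1,1)$ with $\Phi=L_0\Psi$. *)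

theory Defs
  imports "HOL-Analysis.Analysis"
begin

text \<open>Psi is complex valued on (-1,1); dPsi is its derivative on (-1,1).
  Membership in X: finite weighted Dirichlet integral and vanishing flux at both ends.\<close>
definition in_X :: "(real \<Rightarrow> complex) \<Rightarrow> bool" where
  "in_X dPsi \<longleftrightarrow>
     (\<lambda>x. (1 - x\<^sup>2) * (cmod (dPsi x))\<^sup>2) integrable_on {-1<..<1::real} \<and>
     ((\<lambda>x. complex_of_real (1 - x\<^sup>2) * dPsi x) \<longlongrightarrow> 0) (at_right (-1)) \<and>
     ((\<lambda>x. complex_of_real (1 - x\<^sup>2) * dPsi x) \<longlongrightarrow> 0) (at_left 1)"

definition solves :: "real \<Rightarrow> complex \<Rightarrow> (real \<Rightarrow> complex) \<Rightarrow> bool" where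
  "solves \<epsilon> \<mu> Psi \<longleftrightarrow>
     (\<exists>dPsi Phi dPhi.
        in_X dPsi \<and>
        (\<forall>x\<in>{-1<..<1::real}.
           (Psi has_vector_derivative dPsi x) (at x) \<and>
           ((\<lambda>t. complex_of_real (1 - t\<^sup>2) * dPsi t) has_vector_derivative Phi x) (at x) \<and>
           (Phi has_vector_derivative dPhi x) (at x) \<and>
           dPhi x + complex_of_real (\<epsilon> / (1 - x\<^sup>2)) * Phi x = \<mu> * dPsi x))"

text \<open>Psi is nonzero modulo additive constants.\<close>
definition nonconstant :: "(real \<Rightarrow> complex) \<Rightarrow> bool" where
  "nonconstant Psi \<longleftrightarrow> \<not> (\<exists>c. \<forall>x\<in>{-1<..<1::real}. Psi x = c)"

text \<open>Eigenvalue: by the paper's convention the constants give mu = 0; any other mu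
  is an eigenvalue iff it has an eigenfunction that is nonzero modulo constants.\<close>
definition eigenvalue :: "real \<Rightarrow> complex \<Rightarrow> bool" where
  "eigenvalue \<epsilon> \<mu> \<longleftrightarrow> \<mu> = 0 \<or> (\<exists>Psi. solves \<epsilon> \<mu> Psi \<and> nonconstant Psi)"

end

theory Submission
  imports Defs "HOL-Computational_Algebra.Polynomial"
begin

text \<open>Write w = (1 - x^2) Psi'. Then w' = Phi, the system becomes
  (1 - x^2) w'' + eps w' = mu w on (-1,1), and membership in X forces w -> 0 at both ends.
  With the integrating factor p = ((1 + x)/(1 - x))^(eps/2) the equation reads
  (p w')' = mu p w / (1 - x^2).

  For eps < 2 this first-order form shows that also (1 - x^2) w' -> 0 at both ends, so w can be
  integrated by parts against polynomials: the moments m_j of w satisfy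
  (mu + (j+1)(j+2)) m_j + eps j m_(j-1) - j(j-1) m_(j-2) = 0.  Unless mu = -(k+1)(k+2) = -n(n+1)
  with n = k + 1, all moments vanish, hence w = 0 by Weierstrass approximation; for such mu the
  single moment m_k determines w, which gives simplicity.  Conversely
  w = (1 + x)^(1-eps/2) (1 - x)^(1+eps/2) V with V a polynomial of degree k is an eigenfunction,
  and w/(1 - x^2) lies in X exactly because eps < 2.

  For eps >= 2, 1/p >= 1/(1 + x) is not integrable at -1: if p w' were large at some point r, it
  would stay nearly constant on (-1, r] and w would grow like ln (1 + x), contradicting w -> 0.
  This bounds w' by a multiple of the supremum of w to its left, and a Gronwall argument starting
  from w(-1) = 0 gives w = 0.\<close>


section \<open>Analysis on an interval\<close>

lemma norm_diff_le_of_derivative_bound: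
  fixes f :: "real \<Rightarrow> 'a::banach"
  assumes "a \<le> b"
    and f': "\<And>x. x \<in> {a..b} \<Longrightarrow> (f has_vector_derivative f' x) (at x)"
    and g': "\<And>x. x \<in> {a..b} \<Longrightarrow> (g has_real_derivative g' x) (at x)"
    and le: "\<And>x. x \<in> {a..b} \<Longrightarrow> norm (f' x) \<le> g' x"
  shows "norm (f b - f a) \<le> g b - g a"
proof -
  have f: "(f' has_integral (f b - f a)) {a..b}"
    by (rule fundamental_theorem_of_calculus[OF \<open>a \<le> b\<close>])
       (use f' has_vector_derivative_at_within in blast)
  have g: "(g' has_integral (g b - g a)) {a..b}"
    by (rule fundamental_theorem_of_calculus[OF \<open>a \<le> b\<close>])
       (use g' has_real_derivative_iff_has_vector_derivative
           has_vector_derivative_at_within in blast)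
  have "norm (integral {a..b} f') \<le> integral {a..b} g'"
    by (rule integral_norm_bound_integral) (use f g le in auto)
  then show ?thesis using f g by (simp add: integral_unique)
qed

lemma continuous_on_Icc_extension:
  fixes f :: "real \<Rightarrow> 'a::topological_space"
  assumes "a < b" and f: "continuous_on {a<..<b} f"
    and A: "(f \<longlongrightarrow> A) (at_right a)" and B: "(f \<longlongrightarrow> B) (at_left b)"
  shows "continuous_on {a..b} (\<lambda>x. if x = a then A else if x = b then B else f x)"
    (is "continuous_on _ ?g")
proof (unfold continuous_on_eq_continuous_within, intro ballI)
  fix x assume "x \<in> {a..b}"
  then consider "x = a" | "x = b" | "x \<in> {a<..<b}" by fastforce
  then show "continuous (at x within {a..b}) ?g"
  proof cases
    case 1
    have "(?g \<longlongrightarrow> A) (at_right a)"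
      using A by (rule Lim_transform_eventually)
        (use \<open>a < b\<close> in \<open>auto simp: eventually_at_right_field intro: exI[of _ b]\<close>)
    then show ?thesis using 1 \<open>a < b\<close> by (simp add: continuous_within at_within_Icc_at_right)
  next
    case 2
    have "(?g \<longlongrightarrow> B) (at_left b)"
      using B by (rule Lim_transform_eventually)
        (use \<open>a < b\<close> in \<open>auto simp: eventually_at_left_field intro: exI[of _ a]\<close>)
    then show ?thesis using 2 \<open>a < b\<close> by (simp add: continuous_within at_within_Icc_at_left)
  next
    case 3
    have "(f \<longlongrightarrow> ?g x) (at x)"
      using continuous_on_interior[OF f] 3 by (simp add: isCont_def)
    then have "(?g \<longlongrightarrow> ?g x) (at x)"
      by (rule Lim_transform_within_open[of _ _ _ _ "{a<..<b}"]) (use 3 in auto)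
    then show ?thesis by (simp add: isCont_def continuous_at_imp_continuous_at_within)
  qed
qed

lemma has_integral_of_tendsto_endpoints:
  fixes G :: "real \<Rightarrow> 'a::banach"
  assumes "a < b" and G': "\<And>x. x \<in> {a<..<b} \<Longrightarrow> (G has_vector_derivative g x) (at x)"
    and A: "(G \<longlongrightarrow> A) (at_right a)" and B: "(G \<longlongrightarrow> B) (at_left b)"
  shows "(g has_integral B - A) {a..b}"
proof -
  let ?H = "\<lambda>x. if x = a then A else if x = b then B else G x"
  have "continuous_on {a<..<b} G"
    using G' by (meson continuous_at_imp_continuous_on has_vector_derivative_continuous)
  then have "continuous_on {a..b} ?H" by (rule continuous_on_Icc_extension[OF \<open>a < b\<close> _ A B])
  moreover have "(?H has_vector_derivative g x) (at x)" if "x \<in> {a<..<b}" for x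
    using G'[OF that] by (rule has_vector_derivative_transform_within_open[of _ _ _ "{a<..<b}"])
      (use that in auto)
  ultimately have "(g has_integral ?H b - ?H a) {a..b}"
    using \<open>a < b\<close> by (intro fundamental_theorem_of_calculus_interior) auto
  then show ?thesis using \<open>a < b\<close> by simp
qed

lemma tendsto_exp_mult_ln_0:
  fixes f :: "'a \<Rightarrow> real"
  assumes "e > 0" and f: "(f \<longlongrightarrow> 0) F" and pos: "eventually (\<lambda>x. f x > 0) F"
  shows "((\<lambda>x. exp (e * ln (f x))) \<longlongrightarrow> 0) F"
proof -
  have "((\<lambda>x. f x powr e) \<longlongrightarrow> 0) F"
    using \<open>e > 0\<close> f pos by (intro tendsto_zero_powrI) (auto elim: eventually_mono)
  then show ?thesis by (rule Lim_transform_eventually)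
      (use pos in \<open>auto simp: powr_def elim: eventually_mono\<close>)
qed

lemma powr_1_plus_integrable_on:
  assumes "a > -1"
  shows "(\<lambda>x. (1 + x) powr a) integrable_on {-1<..<1::real}"
proof -
  define F where "F x = (1 + x) powr (a + 1) / (a + 1)" for x :: real
  have "((\<lambda>x. (1 + x) powr a) has_integral (F 1 - F (-1))) {-1..1}"
  proof (rule fundamental_theorem_of_calculus_interior)
    show "continuous_on {-1..1} F" unfolding F_def
      by (intro continuous_intros continuous_on_powr') (use assms in auto)
    fix x :: real assume x: "x \<in> {-1<..<1}"
    have "(F has_real_derivative (a + 1) * (1 + x) powr (a + 1 - 1) * 1 / (a + 1)) (at x)"
      unfolding F_def using x by (auto intro!: derivative_eq_intros)
    then show "(F has_vector_derivative (1 + x) powr a) (at x)"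
      using assms by (simp add: has_real_derivative_iff_has_vector_derivative)
  qed simp
  then show ?thesis using integrable_on_open_interval_real by blast
qed

lemma integral_mult_polynomial_eq_0:
  fixes f :: "real \<Rightarrow> real"
  assumes f: "continuous_on {a..b} f"
    and moments: "\<And>j. integral {a..b} (\<lambda>x. f x * x ^ j) = 0"
    and g: "real_polynomial_function g"
  shows "integral {a..b} (\<lambda>x. f x * g x) = 0"
proof -
  obtain c n where g_eq: "g = (\<lambda>x. \<Sum>i\<le>n. c i * x ^ i)"
    using g real_polynomial_function_iff_sum by blast
  have "integral {a..b} (\<lambda>x. f x * g x) = integral {a..b} (\<lambda>x. \<Sum>i\<le>n. c i * (f x * x ^ i))"
    by (simp add: g_eq sum_distrib_left mult_ac)
  also have "\<dots> = (\<Sum>i\<le>n. c i * integral {a..b} (\<lambda>x. f x * x ^ i))"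
    by (subst integral_sum) (auto intro!: integrable_continuous_interval continuous_intros f)
  finally show ?thesis by (simp add: moments)
qed

lemma integral_square_le_if_moments_eq_0:
  fixes f :: "real \<Rightarrow> real"
  assumes "a \<le> b" and f: "continuous_on {a..b} f"
    and moments: "\<And>j. integral {a..b} (\<lambda>x. f x * x ^ j) = 0"
    and B: "\<And>x. x \<in> {a..b} \<Longrightarrow> \<bar>f x\<bar> \<le> B" and "e > 0"
  shows "integral {a..b} (\<lambda>x. f x * f x) \<le> B * (b - a) * e"
proof -
  have int: "(\<lambda>x. f x * g x) integrable_on {a..b}" if "continuous_on {a..b} g" for g
    by (intro integrable_continuous_interval continuous_intros f that)
  obtain g where g: "real_polynomial_function g" and fg: "\<And>x. x \<in> {a..b} \<Longrightarrow> \<bar>f x - g x\<bar> < e"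
    using Stone_Weierstrass_real_polynomial_function[OF compact_Icc f \<open>e > 0\<close>] by blast
  have cg: "continuous_on {a..b} g"
    using continuous_on_polymonial_function g real_polynomial_function_eq by blast
  have "integral {a..b} (\<lambda>x. f x * f x)
      = integral {a..b} (\<lambda>x. f x * (f x - g x)) + integral {a..b} (\<lambda>x. f x * g x)"
    using int[of "\<lambda>x. f x - g x"] int[OF cg] cg f
    by (subst integral_add[symmetric]) (auto intro: continuous_intros simp: algebra_simps)
  also have "integral {a..b} (\<lambda>x. f x * g x) = 0"
    by (rule integral_mult_polynomial_eq_0[OF f moments g])
  also have "integral {a..b} (\<lambda>x. f x * (f x - g x)) \<le> integral {a..b} (\<lambda>x. B * e)"
  proof (rule integral_le)
    fix x assume "x \<in> {a..b}"
    then have "\<bar>f x\<bar> * \<bar>f x - g x\<bar> \<le> B * e"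
      using B fg by (intro mult_mono) (auto intro: less_imp_le order_trans[OF abs_ge_zero])
    then have "\<bar>f x * (f x - g x)\<bar> \<le> B * e" by (simp add: abs_mult)
    then show "f x * (f x - g x) \<le> B * e" by simp
  qed (use int[OF continuous_on_diff[OF f cg]] in auto)
  finally show ?thesis using \<open>a \<le> b\<close> by (simp add: mult_ac)
qed

lemma continuous_eq_0_if_moments_eq_0_real:
  fixes f :: "real \<Rightarrow> real"
  assumes "a < b" and f: "continuous_on {a..b} f"
    and moments: "\<And>j. integral {a..b} (\<lambda>x. f x * x ^ j) = 0"
    and x: "x \<in> {a..b}"
  shows "f x = 0"
proof -
  obtain B where B: "\<And>x. x \<in> {a..b} \<Longrightarrow> \<bar>f x\<bar> \<le> B"
    using compact_imp_bounded[OF compact_continuous_image[OF f compact_Icc]]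
    unfolding bounded_iff by force
  define C where "C = B * (b - a)"
  have "C \<ge> 0" using B[of a] \<open>a < b\<close> by (simp add: C_def)
  define I where "I = integral {a..b} (\<lambda>x. f x * f x)"
  have "I \<le> 0"
  proof (rule field_le_epsilon)
    fix e :: real assume "e > 0"
    have "I \<le> C * (e / (C + 1))"
      unfolding I_def C_def using \<open>a < b\<close> \<open>e > 0\<close> \<open>C \<ge> 0\<close>
      by (intro integral_square_le_if_moments_eq_0[OF _ f moments B]) (auto simp: C_def)
    also have "\<dots> \<le> e" using \<open>C \<ge> 0\<close> \<open>e > 0\<close> by (simp add: field_simps)
    finally show "I \<le> 0 + e" by simp
  qed
  moreover have int: "(\<lambda>x. f x * f x) integrable_on {a..b}"
    by (intro integrable_continuous_interval continuous_intros f)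
  then have "I \<ge> 0" unfolding I_def by (intro integral_nonneg) auto
  ultimately have "((\<lambda>x. f x * f x) has_integral 0) (cbox a b)"
    using integrable_integral[OF int] by (simp add: I_def)
  moreover have "continuous_on (cbox a b) (\<lambda>x. f x * f x)"
    using f by (auto intro: continuous_intros)
  ultimately have "f x * f x = 0"
    using x \<open>a < b\<close> by (intro has_integral_0_cbox_imp_0[of a b "\<lambda>x. f x * f x"]) auto
  then show ?thesis by simp
qed

lemma continuous_eq_0_if_moments_eq_0:
  fixes W :: "real \<Rightarrow> complex"
  assumes "a < b" and W: "continuous_on {a..b} W"
    and moments: "\<And>j. integral {a..b} (\<lambda>x. W x * of_real (x ^ j)) = 0"
    and x: "x \<in> {a..b}"
  shows "W x = 0"
proof -
  have int: "(\<lambda>x. W x * of_real (x ^ j)) integrable_on {a..b}" for j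
    by (intro integrable_continuous_interval continuous_intros W)
  have "integral {a..b} (\<lambda>x. Re (W x) * x ^ j) = 0"
      "integral {a..b} (\<lambda>x. Im (W x) * x ^ j) = 0" for j
    using integral_linear[OF int[of j] bounded_linear_Re]
        integral_linear[OF int[of j] bounded_linear_Im]
      moments[of j]
    by (simp_all add: o_def)
  then have "Re (W x) = 0" "Im (W x) = 0"
    using continuous_eq_0_if_moments_eq_0_real[OF \<open>a < b\<close> _ _ x, of "\<lambda>x. Re (W x)"]
      continuous_eq_0_if_moments_eq_0_real[OF \<open>a < b\<close> _ _ x, of "\<lambda>x. Im (W x)"]
      continuous_on_Re[OF W] continuous_on_Im[OF W]
    by blast+
  then show ?thesis by (simp add: complex_eq_iff)
qed

lemma square_less_1_of_mem: "x \<in> {-1<..<1} \<Longrightarrow> x\<^sup>2 < (1::real)"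
  by (auto simp: abs_square_less_1)

lemma of_real_1_minus_square_neq_0:
  assumes "x \<in> {-1<..<1}"
  shows "complex_of_real (1 - x\<^sup>2) \<noteq> 0"
proof -
  have "1 - x\<^sup>2 \<noteq> 0" using square_less_1_of_mem[OF assms] by simp
  then show ?thesis by (simp only: of_real_eq_0_iff not_False_eq_True)
qed

lemma of_real_1_minus_square_mult_div:
  assumes "x \<in> {-1<..<1}"
  shows "complex_of_real (1 - x\<^sup>2) * of_real (y / (1 - x\<^sup>2)) = of_real y"
proof -
  have "(1 - x\<^sup>2) * (y / (1 - x\<^sup>2)) = y" using square_less_1_of_mem[OF assms] by simp
  then show ?thesis by (metis of_real_mult)
qed

lemma Re_cnj_mult_ge:
  fixes z Q :: complex
  assumes "norm (z - Q) \<le> norm Q / 4"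
  shows "3 / 4 * (norm Q)\<^sup>2 \<le> Re (cnj Q * z)"
proof -
  have "\<bar>Re (cnj Q * (z - Q))\<bar> \<le> norm (cnj Q * (z - Q))" by (rule abs_Re_le_cmod)
  also have "\<dots> \<le> norm Q * (norm Q / 4)"
    using mult_left_mono[OF assms norm_ge_zero[of Q]] by (simp add: norm_mult)
  also have "\<dots> = (norm Q)\<^sup>2 / 4" by (simp add: power2_eq_square)
  finally have "\<bar>Re (cnj Q * (z - Q))\<bar> \<le> (norm Q)\<^sup>2 / 4" .
  moreover have "(norm Q)\<^sup>2 = Re Q * Re Q + Im Q * Im Q"
    using cmod_power2[of Q] by (simp add: power2_eq_square)
  then have "Re (cnj Q * z) = (norm Q)\<^sup>2 + Re (cnj Q * (z - Q))" by (simp add: algebra_simps)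
  ultimately show ?thesis by linarith
qed

section \<open>The flux equation\<close>

text \<open>The flux w = (1 - x^2) Psi' of a solution Psi, with c = eps/2; w' and w'' are
  Phi and Phi'.\<close>
definition flux_solution ::
    "real \<Rightarrow> complex \<Rightarrow> (real \<Rightarrow> complex) \<Rightarrow> (real \<Rightarrow> complex) \<Rightarrow> (real \<Rightarrow> complex) \<Rightarrow> bool" where
  "flux_solution c \<mu> w w' w'' \<longleftrightarrow>
     (\<forall>x\<in>{-1<..<1}. (w has_vector_derivative w' x) (at x) \<and>
         (w' has_vector_derivative w'' x) (at x) \<and>
        of_real (1 - x\<^sup>2) * w'' x + of_real (2 * c) * w' x = \<mu> * w x) \<and>
     (w \<longlongrightarrow> 0) (at_right (-1)) \<and> (w \<longlongrightarrow> 0) (at_left 1)"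

text \<open>On (-1,1) this is ((1 + x)/(1 - x))^c, and
  (p w')' = p ((1 - x^2) w'' + 2 c w') / (1 - x^2).\<close>
definition integrating_factor :: "real \<Rightarrow> real \<Rightarrow> real" where
  "integrating_factor c x = exp (c * (ln (1 + x) - ln (1 - x)))"

definition zero_outside :: "(real \<Rightarrow> complex) \<Rightarrow> real \<Rightarrow> complex" where
  "zero_outside w x = (if x \<in> {-1<..<1} then w x else 0)"

lemma integrating_factor_pos: "integrating_factor c x > 0"
  by (simp add: integrating_factor_def)

lemma integrating_factor_0 [simp]: "integrating_factor c 0 = 1"
  by (simp add: integrating_factor_def)

lemma integrating_factor_has_derivative:
  assumes "x \<in> {-1<..<1}"
  shows "(integrating_factor c has_real_derivative
           2 * c * integrating_factor c x / (1 - x\<^sup>2)) (at x)"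
proof -
  have x: "1 + x > 0" "1 - x > 0" using assms by auto
  have "(integrating_factor c has_real_derivative
          integrating_factor c x * (c * (1 / (1 + x) - (-1) / (1 - x)))) (at x)"
    unfolding integrating_factor_def using x by (auto intro!: derivative_eq_intros)
  moreover have "integrating_factor c x * (c * (1 / (1 + x) - (-1) / (1 - x)))
      = 2 * c * integrating_factor c x / (1 - x\<^sup>2)"
    using x by (simp add: field_simps power2_eq_square)
  ultimately show ?thesis by simp
qed

lemma integrating_factor_mono:
  assumes "c \<ge> 0" "s \<in> {-1<..<1}" "t \<in> {-1<..<1}" "s \<le> t"
  shows "integrating_factor c s \<le> integrating_factor c t"
proof -
  have "ln (1 + s) \<le> ln (1 + t)" "ln (1 - t) \<le> ln (1 - s)" using assms by auto
  then have "c * (ln (1 + s) - ln (1 - s)) \<le> c * (ln (1 + t) - ln (1 - t))"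
    using assms(1) by (intro mult_left_mono) auto
  then show ?thesis unfolding integrating_factor_def by simp
qed

lemma inverse_integrating_factor_ge:
  assumes "c \<ge> 1" and s: "s \<in> {-1<..0}"
  shows "1 / (1 + s) \<le> 1 / integrating_factor c s"
proof -
  define L where "L = ln (1 - s) - ln (1 + s)"
  have "L \<ge> 0" using s unfolding L_def by auto
  have "1 / (1 + s) \<le> (1 - s) / (1 + s)" using s by (intro divide_right_mono) auto
  also have "\<dots> = exp L" unfolding L_def using s by (simp add: exp_diff)
  also have "\<dots> \<le> exp (c * L)" using \<open>c \<ge> 1\<close> \<open>L \<ge> 0\<close> by (simp add: mult_le_cancel_right1)
  also have "\<dots> = 1 / integrating_factor c s"
    by (simp add: integrating_factor_def L_def right_diff_distrib exp_diff)
  finally show ?thesis .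
qed

lemma flux_solution_continuous_on:
  "flux_solution c \<mu> w w' w'' \<Longrightarrow> continuous_on {-1<..<1} w"
  unfolding flux_solution_def
  by (meson continuous_at_imp_continuous_on has_vector_derivative_continuous)

lemma continuous_on_zero_outside:
  assumes "flux_solution c \<mu> w w' w''"
  shows "continuous_on {-1..1} (zero_outside w)"
proof -
  have "continuous_on {-1..1} (\<lambda>x. if x = -1 then 0 else if x = 1 then 0 else w x)"
    using assms flux_solution_continuous_on[OF assms]
    by (intro continuous_on_Icc_extension) (auto simp: flux_solution_def)
  then show ?thesis by (rule continuous_on_cong[THEN iffD1, rotated 2])
      (auto simp: zero_outside_def)
qed

lemma flux_solution_bounded:
  assumes "flux_solution c \<mu> w w' w''"
  obtains B where "B \<ge> 0" "\<And>x. x \<in> {-1<..<1} \<Longrightarrow> norm (w x) \<le> B"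
proof -
  have "compact (zero_outside w ` {-1..1})"
    by (rule compact_continuous_image[OF continuous_on_zero_outside[OF assms]]) simp
  then obtain B where B: "\<And>y. y \<in> zero_outside w ` {-1..1} \<Longrightarrow> norm y \<le> B"
    using compact_imp_bounded bounded_iff by metis
  have "norm (w x) \<le> B" if "x \<in> {-1<..<1}" for x
    using B[of "zero_outside w x"] that by (auto simp: zero_outside_def)
  moreover have "B \<ge> 0" using B[of "zero_outside w 0"] by (simp add: order_trans[OF norm_ge_zero])
  ultimately show ?thesis using that by blast
qed

lemma flux_solution_diff:
  assumes w: "flux_solution c \<mu> w w' w''" and v: "flux_solution c \<mu> v v' v''"
  shows "flux_solution c \<mu> (\<lambda>x. w x - a * v x) (\<lambda>x. w' x - a * v' x) (\<lambda>x. w'' x - a * v'' x)"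
  unfolding flux_solution_def
proof (intro conjI ballI)
  fix x :: real assume x: "x \<in> {-1<..<1}"
  have dw: "(w has_vector_derivative w' x) (at x)" "(w' has_vector_derivative w'' x) (at x)"
      "of_real (1 - x\<^sup>2) * w'' x + of_real (2 * c) * w' x = \<mu> * w x"
    using w x unfolding flux_solution_def by auto
  have dv: "(v has_vector_derivative v' x) (at x)" "(v' has_vector_derivative v'' x) (at x)"
      "of_real (1 - x\<^sup>2) * v'' x + of_real (2 * c) * v' x = \<mu> * v x"
    using v x unfolding flux_solution_def by auto
  show "((\<lambda>x. w x - a * v x) has_vector_derivative w' x - a * v' x) (at x)"
    using has_vector_derivative_diff[OF dw(1) has_vector_derivative_mult_right[OF dv(1), of a]]
    by simp
  show "((\<lambda>x. w' x - a * v' x) has_vector_derivative w'' x - a * v'' x) (at x)"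
    using has_vector_derivative_diff[OF dw(2) has_vector_derivative_mult_right[OF dv(2), of a]]
    by simp
  show "of_real (1 - x\<^sup>2) * (w'' x - a * v'' x) + of_real (2 * c) * (w' x - a * v' x)
      = \<mu> * (w x - a * v x)"
    using dw(3) dv(3) by algebra
next
  have "((\<lambda>x. w x - a * v x) \<longlongrightarrow> 0 - a * 0) (at_right (-1))"
    "((\<lambda>x. w x - a * v x) \<longlongrightarrow> 0 - a * 0) (at_left 1)"
    using w v unfolding flux_solution_def by (intro tendsto_intros; simp)+
  then show "((\<lambda>x. w x - a * v x) \<longlongrightarrow> 0) (at_right (-1))" "((\<lambda>x. w x - a * v x) \<longlongrightarrow> 0) (at_left 1)"
    by simp_all
qed

lemma flux_solution_weighted_deriv:
  assumes "flux_solution c \<mu> w w' w''" and x: "x \<in> {-1<..<1}"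
  shows "((\<lambda>t. of_real (integrating_factor c t) * w' t) has_vector_derivative
           \<mu> * of_real (integrating_factor c x / (1 - x\<^sup>2)) * w x) (at x)"
proof -
  define p where "p = integrating_factor c x"
  have w'': "(w' has_vector_derivative w'' x) (at x)"
   and eq: "of_real (1 - x\<^sup>2) * w'' x + of_real (2 * c) * w' x = \<mu> * w x"
    using assms unfolding flux_solution_def by auto
  have "((\<lambda>t. complex_of_real (integrating_factor c t)) has_vector_derivative
          of_real (2 * c * p / (1 - x\<^sup>2))) (at x)"
    unfolding p_def
      by (rule has_vector_derivative_of_real[OF integrating_factor_has_derivative[OF x]])
  from has_vector_derivative_mult[OF this w'']
  have "((\<lambda>t. of_real (integrating_factor c t) * w' t) has_vector_derivative
         of_real (p / (1 - x\<^sup>2)) * (of_real (1 - x\<^sup>2) * w'' x + of_real (2 * c) * w' x)) (at x)"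
    using square_less_1_of_mem[OF x]
    by (simp add: p_def field_simps flip: of_real_mult of_real_diff of_real_power)
  then show ?thesis unfolding eq p_def by (simp add: mult_ac)
qed

lemma norm_weighted_deriv_le:
  fixes \<mu> z :: complex
  assumes "x \<in> {-1<..<1}" "norm z \<le> B"
  shows "norm (\<mu> * of_real (integrating_factor c x / (1 - x\<^sup>2)) * z)
           \<le> norm \<mu> * B * (integrating_factor c x / (1 - x\<^sup>2))"
proof -
  have r: "integrating_factor c x / (1 - x\<^sup>2) \<ge> 0"
    using square_less_1_of_mem[OF assms(1)] integrating_factor_pos[of c x] by simp
  have "norm (\<mu> * of_real (integrating_factor c x / (1 - x\<^sup>2)) * z)
      = norm \<mu> * (integrating_factor c x / (1 - x\<^sup>2)) * norm z"
    by (simp only: norm_mult norm_of_real abs_of_nonneg[OF r])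
  also have "\<dots> \<le> norm \<mu> * (integrating_factor c x / (1 - x\<^sup>2)) * B"
    using assms(2) mult_nonneg_nonneg[OF norm_ge_zero r] by (intro mult_left_mono) auto
  finally show ?thesis by (simp add: mult_ac)
qed

lemma norm_flux_eq_weighted:
  fixes z :: complex
  assumes "x \<in> {-1<..<1}"
  shows "norm (of_real (1 - x\<^sup>2) * z)
           = (1 - x\<^sup>2) / integrating_factor c x * norm (of_real (integrating_factor c x) * z)"
proof -
  have "1 - x\<^sup>2 > 0" using square_less_1_of_mem[OF assms] by simp
  then show ?thesis using integrating_factor_pos[of c x]
    by (simp only: norm_mult norm_of_real abs_of_pos) (simp add: field_simps)
qed

lemma integrating_factor_div_le_right:
  assumes "c \<ge> 0" "0 \<le> x" "x \<le> t" "t < 1"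
  shows "integrating_factor c x / (1 - x\<^sup>2) \<le> integrating_factor c t / ((1 - x) * sqrt (1 - x))"
proof -
  define p where "p = integrating_factor c"
  have "1 - x > 0" using assms by auto
  have "p x / (1 - x\<^sup>2) \<le> p t / (1 - x)"
  proof (rule frac_le)
    show "p x \<le> p t" unfolding p_def using integrating_factor_mono[of c x t] assms by auto
    show "1 - x \<le> 1 - x\<^sup>2" using assms by (simp add: power2_eq_square mult_left_le)
  qed (use \<open>1 - x > 0\<close> integrating_factor_pos[of c t] in \<open>auto simp: p_def\<close>)
  also have "\<dots> \<le> p t / ((1 - x) * sqrt (1 - x))"
  proof -
    have "sqrt (1 - x) \<le> 1" "sqrt (1 - x) > 0" using assms by auto
    then show ?thesis using integrating_factor_pos[of c t] \<open>1 - x > 0\<close>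
      by (intro divide_left_mono) (auto simp: p_def mult_le_cancel_left1)
  qed
  finally show ?thesis by (simp add: p_def)
qed

lemma integrating_factor_div_le_left:
  assumes "c \<ge> 0" "a > 0" "-1 < x" "x \<le> 0"
  shows "integrating_factor c x / (1 - x\<^sup>2) \<le> exp (- a * ln (1 + x)) / (1 + x)"
proof -
  have "1 + x > 0" using assms by auto
  have "integrating_factor c x / (1 - x\<^sup>2) \<le> 1 / (1 + x)"
  proof (rule frac_le)
    show "integrating_factor c x \<le> 1" using integrating_factor_mono[of c x 0] assms by auto
    have "x * x \<le> x * (-1)" using assms by (intro mult_left_mono_neg) auto
    then show "1 + x \<le> 1 - x\<^sup>2" by (simp add: power2_eq_square)
  qed (use \<open>1 + x > 0\<close> in auto)
  also have "\<dots> \<le> exp (- a * ln (1 + x)) / (1 + x)"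
  proof -
    have "ln (1 + x) \<le> 0" using assms by auto
    then have "1 \<le> exp (- a * ln (1 + x))" using \<open>a > 0\<close> by (simp add: mult_nonneg_nonpos)
    then show ?thesis using \<open>1 + x > 0\<close> by (simp add: divide_right_mono)
  qed
  finally show ?thesis .
qed

lemma weighted_deriv_bound_right:
  assumes sol: "flux_solution c \<mu> w w' w''" and "c \<ge> 0"
    and B: "\<And>x. x \<in> {-1<..<1} \<Longrightarrow> norm (w x) \<le> B" and t: "t \<in> {0..<1}"
  shows "norm (of_real (integrating_factor c t) * w' t)
           \<le> norm (w' 0) + 2 * (norm \<mu> * B) * integrating_factor c t / sqrt (1 - t)"
proof -
  define K where "K = norm \<mu> * B"
  have "K \<ge> 0" using B[of 0] unfolding K_def by (simp add: order_trans[OF norm_ge_zero])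
  define p where "p = integrating_factor c"
  define q where "q s = of_real (p s) * w' s" for s
  define g where "g s = 2 * K * p t / sqrt (1 - s)" for s
  have "norm (q t - q 0) \<le> g t - g 0"
  proof (rule norm_diff_le_of_derivative_bound[of 0 t q _ g
          "\<lambda>s. K * p t / ((1 - s) * sqrt (1 - s))"])
    fix x assume x: "x \<in> {0..t}"
    then have x1: "x \<in> {-1<..<1}" and "1 - x > 0" using t by auto
    show "(q has_vector_derivative \<mu> * of_real (p x / (1 - x\<^sup>2)) * w x) (at x)"
      unfolding q_def p_def by (rule flux_solution_weighted_deriv[OF sol x1])
    show "(g has_real_derivative K * p t / ((1 - x) * sqrt (1 - x))) (at x)"
      unfolding g_def using \<open>1 - x > 0\<close>
      by (auto intro!: derivative_eq_intros simp: field_simps power2_eq_square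
          real_sqrt_mult[symmetric] real_sqrt_divide)
    have "norm (\<mu> * of_real (p x / (1 - x\<^sup>2)) * w x) \<le> K * (p x / (1 - x\<^sup>2))"
      unfolding K_def p_def by (rule norm_weighted_deriv_le[OF x1 B[OF x1]])
    also have "\<dots> \<le> K * (p t / ((1 - x) * sqrt (1 - x)))"
      unfolding p_def using x t \<open>K \<ge> 0\<close>
      by (intro mult_left_mono integrating_factor_div_le_right[OF \<open>c \<ge> 0\<close>]) auto
    finally show "norm (\<mu> * of_real (p x / (1 - x\<^sup>2)) * w x) \<le> K * p t / ((1 - x) * sqrt (1 - x))"
      by simp
  qed (use t in auto)
  moreover have "g 0 \<ge> 0" unfolding g_def p_def using \<open>K \<ge> 0\<close> integrating_factor_pos[of c t] by simp
  ultimately have "norm (q t - q 0) \<le> g t" by simp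
  then show ?thesis
    using norm_triangle_ineq2[of "q t" "q 0"] unfolding g_def q_def p_def K_def by simp
qed

lemma flux_vanishes_at_1:
  assumes sol: "flux_solution c \<mu> w w' w''" and "c \<ge> 0"
  shows "((\<lambda>x. of_real (1 - x\<^sup>2) * w' x) \<longlongrightarrow> 0) (at_left 1)"
proof -
  obtain B where "B \<ge> 0" and B: "\<And>x. x \<in> {-1<..<1} \<Longrightarrow> norm (w x) \<le> B"
    using flux_solution_bounded[OF sol] by blast
  define K where "K = norm \<mu> * B"
  have "K \<ge> 0" using \<open>B \<ge> 0\<close> by (simp add: K_def)
  define h where "h t = (1 - t\<^sup>2) * norm (w' 0) + 2 * K * (1 + t) * sqrt (1 - t)" for t
  have "norm (of_real (1 - t\<^sup>2) * w' t) \<le> h t" if t: "0 < t" "t < 1" for t :: real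
  proof -
    define p where "p = integrating_factor c t"
    have t1: "t \<in> {-1<..<1}" "t \<in> {0..<1}" using t by auto
    have "p \<ge> 1" using integrating_factor_mono[OF \<open>c \<ge> 0\<close>, of 0 t] t by (simp add: p_def)
    have n1: "1 - t\<^sup>2 \<ge> 0" using t by (simp add: abs_square_le_1)
    have "norm (of_real (1 - t\<^sup>2) * w' t) = (1 - t\<^sup>2) / p * norm (of_real p * w' t)"
      unfolding p_def by (rule norm_flux_eq_weighted[OF t1(1)])
    also have "\<dots> \<le> (1 - t\<^sup>2) / p * (norm (w' 0) + 2 * K * p / sqrt (1 - t))"
      using weighted_deriv_bound_right[OF sol \<open>c \<ge> 0\<close> B t1(2)] n1 \<open>p \<ge> 1\<close>
      by (intro mult_left_mono) (auto simp: p_def K_def)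
    also have "\<dots> = (1 - t\<^sup>2) / p * norm (w' 0) + 2 * K * ((1 - t\<^sup>2) / sqrt (1 - t))"
      using \<open>p \<ge> 1\<close> by (simp add: field_simps)
    also have "(1 - t\<^sup>2) / sqrt (1 - t) = (1 + t) * ((1 - t) / sqrt (1 - t))"
      by (simp add: power2_eq_square algebra_simps)
    also have "(1 - t) / sqrt (1 - t) = sqrt (1 - t)"
      using t by (simp add: real_div_sqrt)
    also have "(1 - t\<^sup>2) / p * norm (w' 0) \<le> (1 - t\<^sup>2) * norm (w' 0)"
      using \<open>p \<ge> 1\<close> n1 by (intro mult_right_mono) (auto simp: divide_le_eq mult_le_cancel_left1)
    finally show ?thesis unfolding h_def by (simp add: algebra_simps)
  qed
  then have "eventually (\<lambda>t. norm (of_real (1 - t\<^sup>2) * w' t) \<le> h t) (at_left (1::real))"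
    unfolding eventually_at_left_field by (intro exI[of _ 0]) auto
  moreover have "(h \<longlongrightarrow> 0) (at_left 1)"
  proof -
    have "(h \<longlongrightarrow> h 1) (at_left 1)" unfolding h_def by (intro tendsto_intros)
    then show ?thesis by (simp add: h_def)
  qed
  ultimately show ?thesis by (rule Lim_null_comparison)
qed

lemma weighted_deriv_bound_left:
  assumes sol: "flux_solution c \<mu> w w' w''" and "0 \<le> c" "c < 1"
    and B: "\<And>x. x \<in> {-1<..<1} \<Longrightarrow> norm (w x) \<le> B" and y: "y \<in> {-1<..0}"
  shows "norm (of_real (integrating_factor c y) * w' y)
           \<le> norm (w' 0) + norm \<mu> * B / ((1 - c) / 2) * exp (- ((1 - c) / 2) * ln (1 + y))"
proof -
  define K where "K = norm \<mu> * B"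
  have "K \<ge> 0" using B[of 0] unfolding K_def by (simp add: order_trans[OF norm_ge_zero])
  define a where "a = (1 - c) / 2"
  have "a > 0" using \<open>c < 1\<close> by (simp add: a_def)
  define p where "p = integrating_factor c"
  define q where "q s = of_real (p s) * w' s" for s
  define E where "E s = exp (- a * ln (1 + s))" for s
  define g where "g s = - (K / a) * E s" for s
  have "norm (q 0 - q y) \<le> g 0 - g y"
  proof (rule norm_diff_le_of_derivative_bound[of y 0 q _ g "\<lambda>s. K * E s / (1 + s)"])
    fix x assume x: "x \<in> {y..0}"
    then have x1: "x \<in> {-1<..<1}" and "1 + x > 0" using y by auto
    show "(q has_vector_derivative \<mu> * of_real (p x / (1 - x\<^sup>2)) * w x) (at x)"
      unfolding q_def p_def by (rule flux_solution_weighted_deriv[OF sol x1])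
    have "(g has_real_derivative - (K / a) * (E x * (- a * (1 / (1 + x))))) (at x)"
      unfolding g_def E_def using \<open>1 + x > 0\<close> by (auto intro!: derivative_eq_intros)
    then show "(g has_real_derivative K * E x / (1 + x)) (at x)"
      using \<open>a > 0\<close> by (simp add: field_simps)
    have "norm (\<mu> * of_real (p x / (1 - x\<^sup>2)) * w x) \<le> K * (p x / (1 - x\<^sup>2))"
      unfolding K_def p_def by (rule norm_weighted_deriv_le[OF x1 B[OF x1]])
    also have "\<dots> \<le> K * (E x / (1 + x))"
      unfolding p_def E_def using x y \<open>K \<ge> 0\<close>
      by (intro mult_left_mono integrating_factor_div_le_left[OF \<open>c \<ge> 0\<close> \<open>a > 0\<close>]) auto
    finally show "norm (\<mu> * of_real (p x / (1 - x\<^sup>2)) * w x) \<le> K * E x / (1 + x)" by simp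
  qed (use y in auto)
  moreover have "g 0 \<le> 0" unfolding g_def E_def using \<open>K \<ge> 0\<close> \<open>a > 0\<close> by simp
  ultimately have "norm (q y - q 0) \<le> (K / a) * E y" by (simp add: g_def norm_minus_commute)
  then show ?thesis
    using norm_triangle_ineq2[of "q y" "q 0"] unfolding q_def p_def K_def a_def E_def by simp
qed

lemma one_minus_square_div_integrating_factor_le:
  assumes "0 \<le> c" "-1 < y" "y < 0"
  shows "(1 - y\<^sup>2) / integrating_factor c y \<le> 2 * exp (c * ln 2) * exp ((1 - c) * ln (1 + y))"
proof -
  have "(1 - y\<^sup>2) / integrating_factor c y
      = (1 - y) * (1 + y) * exp (c * ln (1 - y) - c * ln (1 + y))"
    unfolding integrating_factor_def by (simp add: power2_eq_square algebra_simps exp_diff)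
  also have "\<dots> = (1 - y) * exp (ln (1 + y)) * exp (c * ln (1 - y) - c * ln (1 + y))"
    using assms by simp
  also have "\<dots> = (1 - y) * exp (c * ln (1 - y)) * exp ((1 - c) * ln (1 + y))"
    by (simp add: exp_add[symmetric] exp_diff[symmetric] algebra_simps)
  also have "\<dots> \<le> 2 * exp (c * ln 2) * exp ((1 - c) * ln (1 + y))"
  proof -
    have "exp (c * ln (1 - y)) \<le> exp (c * ln 2)" using assms by (auto intro!: mult_left_mono)
    then have "(1 - y) * exp (c * ln (1 - y)) \<le> 2 * exp (c * ln 2)"
      using assms by (intro mult_mono) auto
    then show ?thesis by (intro mult_right_mono) auto
  qed
  finally show ?thesis .
qed

lemma flux_vanishes_at_minus_1:
  assumes sol: "flux_solution c \<mu> w w' w''" and "0 \<le> c" "c < 1"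
  shows "((\<lambda>x. of_real (1 - x\<^sup>2) * w' x) \<longlongrightarrow> 0) (at_right (-1))"
proof -
  obtain B where B: "\<And>x. x \<in> {-1<..<1} \<Longrightarrow> norm (w x) \<le> B"
    using flux_solution_bounded[OF sol] by blast
  define K where "K = norm \<mu> * B / ((1 - c) / 2)"
  define E where "E e y = exp (e * ln (1 + y))" for e y :: real
  define C where "C = 2 * exp (c * ln 2)"
  define h where "h y = C * (norm (w' 0) * E (1 - c) y + K * E ((1 - c) / 2) y)" for y
  have "norm (of_real (1 - y\<^sup>2) * w' y) \<le> h y" if y: "-1 < y" "y < 0" for y :: real
  proof -
    define p where "p = integrating_factor c y"
    have y1: "y \<in> {-1<..<1}" "y \<in> {-1<..0}" using y by auto
    have "p > 0" using integrating_factor_pos by (simp add: p_def)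
    have "norm (of_real (1 - y\<^sup>2) * w' y) = (1 - y\<^sup>2) / p * norm (of_real p * w' y)"
      unfolding p_def by (rule norm_flux_eq_weighted[OF y1(1)])
    also have "\<dots> \<le> C * E (1 - c) y * (norm (w' 0) + K * E (- ((1 - c) / 2)) y)"
      using weighted_deriv_bound_left[OF sol \<open>0 \<le> c\<close> \<open>c < 1\<close> B y1(2)] \<open>p > 0\<close>
        one_minus_square_div_integrating_factor_le[OF \<open>0 \<le> c\<close> y] square_less_1_of_mem[OF y1(1)]
      by (intro mult_mono) (auto simp: p_def K_def C_def E_def)
    also have "E (1 - c) y * E (- ((1 - c) / 2)) y = E ((1 - c) / 2) y"
      unfolding E_def by (simp add: exp_add[symmetric] field_simps)
    then have "C * E (1 - c) y * (norm (w' 0) + K * E (- ((1 - c) / 2)) y) = h y"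
      unfolding h_def by (simp add: algebra_simps)
    finally show ?thesis .
  qed
  then have "eventually (\<lambda>y. norm (of_real (1 - y\<^sup>2) * w' y) \<le> h y) (at_right (-1::real))"
    unfolding eventually_at_right_field by (intro exI[of _ 0]) auto
  moreover have "(h \<longlongrightarrow> 0) (at_right (-1))"
  proof -
    have lim: "((\<lambda>y. 1 + y) \<longlongrightarrow> 0) (at_right (-1::real))"
      by (rule tendsto_eq_intros) (auto intro!: tendsto_intros)
    have pos: "eventually (\<lambda>y. 1 + y > 0) (at_right (-1::real))"
      by (simp add: eventually_at_right_field) (auto intro: exI[of _ 0])
    have "(E (1 - c) \<longlongrightarrow> 0) (at_right (-1))" "(E ((1 - c) / 2) \<longlongrightarrow> 0) (at_right (-1))"
      unfolding E_def using \<open>c < 1\<close> by (intro tendsto_exp_mult_ln_0[OF _ lim pos]; simp)+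
    then have "(h \<longlongrightarrow> C * (norm (w' 0) * 0 + K * 0)) (at_right (-1))"
      unfolding h_def by (intro tendsto_intros)
    then show ?thesis by simp
  qed
  ultimately show ?thesis by (rule Lim_null_comparison)
qed

section \<open>Moments of flux solutions for c < 1\<close>

lemma flux_solution_green_identity:
  fixes \<phi> \<phi>' \<phi>'' :: "real \<Rightarrow> real"
  assumes sol: "flux_solution c \<mu> w w' w''"
    and \<phi>': "\<And>x. (\<phi> has_real_derivative \<phi>' x) (at x)"
    and \<phi>'': "\<And>x. (\<phi>' has_real_derivative \<phi>'' x) (at x)"
    and x: "x \<in> {-1<..<1}"
  shows "((\<lambda>x. of_real (1 - x\<^sup>2) * w' x * of_real (\<phi> x)
          - w x * of_real ((1 - x\<^sup>2) * \<phi>' x - 2 * x * \<phi> x)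
            + of_real (2 * c) * w x * of_real (\<phi> x)) has_vector_derivative
          w x * (\<mu> * of_real (\<phi> x)
                - of_real ((1 - x\<^sup>2) * \<phi>'' x - 4 * x * \<phi>' x - 2 * \<phi> x - 2 * c * \<phi>' x)))
         (at x)"
proof -
  have w': "(w has_vector_derivative w' x) (at x)"
    and w'': "(w' has_vector_derivative w'' x) (at x)"
    and eq: "of_real (1 - x\<^sup>2) * w'' x + of_real (2 * c) * w' x = \<mu> * w x"
    using sol x unfolding flux_solution_def by auto
  have d1: "((\<lambda>t. complex_of_real (1 - t\<^sup>2)) has_vector_derivative of_real (- 2 * x)) (at x)"
    by (rule has_vector_derivative_of_real) (auto intro!: derivative_eq_intros)
  have d2: "((\<lambda>t. complex_of_real (\<phi> t)) has_vector_derivative of_real (\<phi>' x)) (at x)"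
    by (rule has_vector_derivative_of_real[OF \<phi>'])
  have d3: "((\<lambda>t. complex_of_real ((1 - t\<^sup>2) * \<phi>' t - 2 * t * \<phi> t)) has_vector_derivative
      of_real ((- 2 * x) * \<phi>' x + (1 - x\<^sup>2) * \<phi>'' x - 2 * \<phi> x - 2 * x * \<phi>' x)) (at x)"
    by (rule has_vector_derivative_of_real) (auto intro!: derivative_eq_intros \<phi>' \<phi>'')
  note d = has_vector_derivative_add[OF has_vector_derivative_diff[OF
      has_vector_derivative_mult[OF has_vector_derivative_mult[OF d1 w''] d2]
      has_vector_derivative_mult[OF w' d3]]
      has_vector_derivative_mult[OF has_vector_derivative_mult[OF
        has_vector_derivative_const[of "of_real (2 * c)"] w'] d2]]
  have Fx: "w x * (\<mu> * of_real (\<phi> x)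
        - of_real ((1 - x\<^sup>2) * \<phi>'' x - 4 * x * \<phi>' x - 2 * \<phi> x - 2 * c * \<phi>' x))
      = (of_real (1 - x\<^sup>2) * w'' x + of_real (2 * c) * w' x) * of_real (\<phi> x)
        - w x * of_real ((1 - x\<^sup>2) * \<phi>'' x - 4 * x * \<phi>' x - 2 * \<phi> x - 2 * c * \<phi>' x)"
    unfolding eq by (simp add: algebra_simps)
  show ?thesis
    by (rule has_vector_derivative_eq_rhs[OF d]) (simp only: Fx, simp add: algebra_simps)
qed

text \<open>The bracket is the formal adjoint ((1 - x^2) phi)'' - 2 c phi' applied to phi.\<close>
lemma flux_solution_weak_form:
  fixes \<phi> \<phi>' \<phi>'' :: "real \<Rightarrow> real"
  assumes sol: "flux_solution c \<mu> w w' w''" and "0 \<le> c" "c < 1"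
    and \<phi>': "\<And>x. (\<phi> has_real_derivative \<phi>' x) (at x)"
    and \<phi>'': "\<And>x. (\<phi>' has_real_derivative \<phi>'' x) (at x)"
  shows "((\<lambda>x. zero_outside w x * (\<mu> * of_real (\<phi> x)
            - of_real ((1 - x\<^sup>2) * \<phi>'' x - 4 * x * \<phi>' x - 2 * \<phi> x - 2 * c * \<phi>' x)))
          has_integral 0) {-1..1}"
proof -
  define G where "G x = of_real (1 - x\<^sup>2) * w' x * of_real (\<phi> x)
      - w x * of_real ((1 - x\<^sup>2) * \<phi>' x - 2 * x * \<phi> x) + of_real (2 * c) * w x * of_real (\<phi> x)" for x
  have w: "(w \<longlongrightarrow> 0) (at_left 1)" "(w \<longlongrightarrow> 0) (at_right (-1))"
    using sol by (auto simp: flux_solution_def)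
  have lim: "((\<lambda>x. complex_of_real (f x)) \<longlongrightarrow> of_real (f a)) (at a within S)"
    if "isCont f a" for f :: "real \<Rightarrow> real" and a S
    using that by (intro tendsto_of_real) (auto simp: isCont_def intro: tendsto_within_subset)
  have cont: "isCont \<phi> x" "isCont (\<lambda>x. (1 - x\<^sup>2) * \<phi>' x - 2 * x * \<phi> x) x" for x
    using DERIV_isCont[OF \<phi>'] DERIV_isCont[OF \<phi>''] by (auto intro!: continuous_intros)
  have "(G \<longlongrightarrow> 0 * of_real (\<phi> 1) - 0 * of_real ((1 - 1\<^sup>2) * \<phi>' 1 - 2 * 1 * \<phi> 1)
      + of_real (2 * c) * 0 * of_real (\<phi> 1)) (at_left 1)"
    unfolding G_def by (intro tendsto_intros flux_vanishes_at_1[OF sol \<open>0 \<le> c\<close>] w lim cont)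
  moreover have "(G \<longlongrightarrow> 0 * of_real (\<phi> (-1)) - 0 * of_real ((1 - (-1)\<^sup>2) * \<phi>' (-1) - 2 * (-1) * \<phi> (-1))
      + of_real (2 * c) * 0 * of_real (\<phi> (-1))) (at_right (-1))"
    unfolding G_def
    by (intro tendsto_intros flux_vanishes_at_minus_1[OF sol \<open>0 \<le> c\<close> \<open>c < 1\<close>] w lim cont)
  moreover have "(G has_vector_derivative zero_outside w x * (\<mu> * of_real (\<phi> x)
      - of_real ((1 - x\<^sup>2) * \<phi>'' x - 4 * x * \<phi>' x - 2 * \<phi> x - 2 * c * \<phi>' x))) (at x)"
    if x: "x \<in> {-1<..<1}" for x
    using flux_solution_green_identity[OF sol \<phi>' \<phi>'' x] x
    unfolding G_def[abs_def] zero_outside_def by simp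
  ultimately show ?thesis
    using has_integral_of_tendsto_endpoints[of "-1" 1 G _ 0 0] by simp
qed

definition moment :: "(real \<Rightarrow> complex) \<Rightarrow> nat \<Rightarrow> complex" where
  "moment w j = integral {-1..1} (\<lambda>x. zero_outside w x * of_real (x ^ j))"

lemma has_integral_moment:
  assumes "flux_solution c \<mu> w w' w''"
  shows "((\<lambda>x. zero_outside w x * of_real (x ^ j)) has_integral moment w j) {-1..1}"
  unfolding moment_def
  by (intro integrable_integral integrable_continuous_interval continuous_intros
      continuous_on_zero_outside[OF assms])

lemma monomial_adjoint_eq:
  fixes x c :: real
  shows "(1 - x\<^sup>2) * (real j * (real (j - 1) * x ^ (j - 2))) - 4 * x * (real j * x ^ (j - 1))
      - 2 * x ^ j - 2 * c * (real j * x ^ (j - 1))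
    = real (j * (j - 1)) * x ^ (j - 2) - real ((j + 1) * (j + 2)) * x ^ j
        - 2 * c * real j * x ^ (j - 1)"
proof (cases j)
  case (Suc k)
  then show ?thesis by (cases k) (simp_all add: algebra_simps power2_eq_square)
qed simp

text \<open>For j < 2 the truncated indices j - 1 and j - 2 (natural-number subtraction) occur only
  with coefficient 0.\<close>
lemma moment_recurrence:
  assumes sol: "flux_solution c \<mu> w w' w''" and "0 \<le> c" "c < 1"
  shows "(\<mu> + of_nat ((j + 1) * (j + 2))) * moment w j + of_real (2 * c * j) * moment w (j - 1)
           - of_nat (j * (j - 1)) * moment w (j - 2) = 0"
proof -
  define W where "W = zero_outside w"
  define F where "F x = (\<mu> + of_nat ((j + 1) * (j + 2))) * (W x * of_real (x ^ j))
       + of_real (2 * c * j) * (W x * of_real (x ^ (j - 1)))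
       - of_nat (j * (j - 1)) * (W x * of_real (x ^ (j - 2)))" for x
  have "((\<lambda>x. W x * (\<mu> * of_real (x ^ j)
        - of_real ((1 - x\<^sup>2) * (real j * (real (j - 1) * x ^ (j - 2)))
            - 4 * x * (real j * x ^ (j - 1)) - 2 * x ^ j - 2 * c * (real j * x ^ (j - 1)))))
          has_integral 0) {-1..1}"
    unfolding W_def
  proof (rule flux_solution_weak_form[OF sol \<open>0 \<le> c\<close> \<open>c < 1\<close>])
    show "((\<lambda>x. x ^ j) has_real_derivative real j * x ^ (j - 1)) (at x)" for x :: real
      using DERIV_pow[of j x] by simp
    show "((\<lambda>x. real j * x ^ (j - 1))
          has_real_derivative real j * (real (j - 1) * x ^ (j - 2))) (at x)"
      for x :: real
      using DERIV_cmult[OF DERIV_pow[of "j - 1" x], of "real j"] by (simp add: numeral_2_eq_2)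
  qed
  also have "(\<lambda>x. W x * (\<mu> * of_real (x ^ j)
        - of_real ((1 - x\<^sup>2) * (real j * (real (j - 1) * x ^ (j - 2)))
            - 4 * x * (real j * x ^ (j - 1)) - 2 * x ^ j - 2 * c * (real j * x ^ (j - 1))))) = F"
    unfolding monomial_adjoint_eq F_def by (rule ext) (simp add: algebra_simps)
  finally have "(F has_integral 0) {-1..1}" .
  moreover have "(F has_integral (\<mu> + of_nat ((j + 1) * (j + 2))) * moment w j
      + of_real (2 * c * j) * moment w (j - 1) - of_nat (j * (j - 1)) * moment w (j - 2)) {-1..1}"
    unfolding F_def W_def
    by (intro has_integral_add has_integral_diff has_integral_mult_right
        has_integral_moment[OF sol])
  ultimately show ?thesis by (metis has_integral_unique)
qed

lemma moment_diff:
  assumes "flux_solution c \<mu> w w' w''" "flux_solution c \<mu> v v' v''"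
  shows "moment (\<lambda>x. w x - a * v x) j = moment w j - a * moment v j"
proof -
  have "zero_outside (\<lambda>x. w x - a * v x) = (\<lambda>x. zero_outside w x - a * zero_outside v x)"
    by (auto simp: zero_outside_def)
  then have "((\<lambda>x. zero_outside (\<lambda>x. w x - a * v x) x * of_real (x ^ j)) has_integral
               moment w j - a * moment v j) {-1..1}"
    using has_integral_diff[OF has_integral_moment[OF assms(1)]
          has_integral_mult_right[OF has_integral_moment[OF assms(2)], of a]]
    by (simp add: algebra_simps)
  then show ?thesis unfolding moment_def by (rule integral_unique)
qed

lemma flux_solution_eq_0_if_resonant_moments_eq_0:
  assumes sol: "flux_solution c \<mu> w w' w''" and "0 \<le> c" "c < 1"
    and resonant: "\<And>j. \<mu> + of_nat ((j + 1) * (j + 2)) = 0 \<Longrightarrow> moment w j = 0"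
    and x: "x \<in> {-1<..<1}"
  shows "w x = 0"
proof -
  have moments: "moment w j = 0" for j
  proof (induction j rule: less_induct)
    case (less j)
    show ?case
    proof (cases "\<mu> + of_nat ((j + 1) * (j + 2)) = 0")
      case False
      have "of_real (2 * c * j) * moment w (j - 1) = 0"
        using less[of "j - 1"] by (cases j) auto
      moreover have "(of_nat (j * (j - 1)) :: complex) * moment w (j - 2) = 0"
        using less[of "j - 2"] by (cases "j \<ge> 2") (auto simp: not_le less_Suc_eq)
      ultimately have "(\<mu> + of_nat ((j + 1) * (j + 2))) * moment w j = 0"
        using moment_recurrence[OF sol \<open>0 \<le> c\<close> \<open>c < 1\<close>, of j]
        by (simp only: add_0_right diff_0_right)
      with False show ?thesis by simp
    qed (use resonant in blast)
  qed
  have "zero_outside w x = 0"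
    using continuous_eq_0_if_moments_eq_0[of "-1" 1 "zero_outside w"] moments x
      continuous_on_zero_outside[OF sol] by (auto simp: moment_def)
  with x show ?thesis by (simp add: zero_outside_def)
qed

lemma resonance_inj:
  assumes "- of_nat ((k + 1) * (k + 2)) + (of_nat ((j + 1) * (j + 2)) :: complex) = 0"
  shows "j = k"
proof -
  have "(j + 1) * (j + 2) = (k + 1) * (k + 2)"
    using assms by (simp only: add_eq_0_iff minus_minus of_nat_eq_iff)
  moreover have "(j + 1) * (j + 2) < (k + 1) * (k + 2)" if "j < k" for j k :: nat
    using that by (intro mult_strict_mono) auto
  ultimately show ?thesis by (metis less_irrefl nat_neq_iff)
qed

lemma flux_solution_eq_0_if_moment_eq_0:
  assumes sol: "flux_solution c \<mu> w w' w''" and "0 \<le> c" "c < 1"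
    and \<mu>: "\<mu> = - of_nat ((k + 1) * (k + 2))" and "moment w k = 0" and x: "x \<in> {-1<..<1}"
  shows "w x = 0"
proof (rule flux_solution_eq_0_if_resonant_moments_eq_0[OF sol \<open>0 \<le> c\<close> \<open>c < 1\<close> _ x])
  fix j assume "\<mu> + of_nat ((j + 1) * (j + 2)) = 0"
  then have "j = k" unfolding \<mu> by (rule resonance_inj)
  then show "moment w j = 0" using \<open>moment w k = 0\<close> by simp
qed

section \<open>Flux solutions vanish for c >= 1\<close>

lemma weighted_deriv_diff_bound:
  assumes sol: "flux_solution c \<mu> w w' w''" and "c > 0"
    and B: "\<And>s. s \<in> {-1<..r} \<Longrightarrow> norm (w s) \<le> B" and "r < 1"
    and yt: "-1 < y" "y \<le> t" "t \<le> r"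
  shows "norm (of_real (integrating_factor c t) * w' t - of_real (integrating_factor c y) * w' y)
           \<le> norm \<mu> * B * (integrating_factor c t - integrating_factor c y) / (2 * c)"
proof -
  define p where "p = integrating_factor c"
  have "norm (of_real (p t) * w' t - of_real (p y) * w' y)
      \<le> norm \<mu> * B * (p t / (2 * c)) - norm \<mu> * B * (p y / (2 * c))"
  proof (rule norm_diff_le_of_derivative_bound[of y t _ "\<lambda>s. \<mu> * of_real (p s / (1 - s\<^sup>2)) * w s"
        "\<lambda>s. norm \<mu> * B * (p s / (2 * c))" "\<lambda>s. norm \<mu> * B * (p s / (1 - s\<^sup>2))"])
    fix s assume s: "s \<in> {y..t}"
    then have s1: "s \<in> {-1<..<1}" using yt \<open>r < 1\<close> by auto
    show "((\<lambda>s. of_real (p s) * w' s)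
          has_vector_derivative \<mu> * of_real (p s / (1 - s\<^sup>2)) * w s) (at s)"
      unfolding p_def by (rule flux_solution_weighted_deriv[OF sol s1])
    show "((\<lambda>s. norm \<mu> * B * (p s / (2 * c)))
          has_real_derivative norm \<mu> * B * (p s / (1 - s\<^sup>2))) (at s)"
      using DERIV_cmult[OF DERIV_cdivide[OF integrating_factor_has_derivative[OF s1, of c],
            of "2 * c"],
          of "norm \<mu> * B"] \<open>c > 0\<close>
      by (simp add: p_def)
    show "norm (\<mu> * of_real (p s / (1 - s\<^sup>2)) * w s) \<le> norm \<mu> * B * (p s / (1 - s\<^sup>2))"
      unfolding p_def using s yt by (intro norm_weighted_deriv_le[OF s1] B) auto
  qed (use yt in auto)
  then show ?thesis by (simp add: p_def diff_divide_distrib right_diff_distrib)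
qed

lemma Re_flux_growth_large_c:
  assumes sol: "flux_solution c \<mu> w w' w''" and "c \<ge> 1"
    and close: "\<And>s. s \<in> {-1<..t} \<Longrightarrow> norm (of_real (integrating_factor c s) * w' s - Q) \<le> norm Q / 4"
    and "t \<le> 0" "-1 < y" "y \<le> t"
  shows "3 / 4 * (norm Q)\<^sup>2 * (ln (1 + t) - ln (1 + y)) \<le> Re (cnj Q * w t) - Re (cnj Q * w y)"
proof -
  define \<kappa> where "\<kappa> = 3 / 4 * (norm Q)\<^sup>2"
  have "Re (cnj Q * w y) - \<kappa> * ln (1 + y) \<le> Re (cnj Q * w t) - \<kappa> * ln (1 + t)"
  proof (rule deriv_nonneg_imp_mono[of y t _ "\<lambda>s. Re (cnj Q * w' s) - \<kappa> / (1 + s)"])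
    fix s assume s: "s \<in> {y..t}"
    then have s1: "s \<in> {-1<..<1}" "s \<in> {-1<..0}" using \<open>-1 < y\<close> \<open>t \<le> 0\<close> by auto
    have "(w has_vector_derivative w' s) (at s)" using sol s1 unfolding flux_solution_def by auto
    then show "((\<lambda>s. Re (cnj Q * w s) - \<kappa> * ln (1 + s)) has_real_derivative
        Re (cnj Q * w' s) - \<kappa> / (1 + s)) (at s)"
      using s1 by (auto intro!: derivative_eq_intros has_vector_derivative_mult_right)
    define p where "p = integrating_factor c s"
    have "p > 0" using integrating_factor_pos by (simp add: p_def)
    have "\<kappa> \<le> Re (cnj Q * (of_real p * w' s))"
      unfolding \<kappa>_def p_def using s \<open>-1 < y\<close> by (intro Re_cnj_mult_ge close) auto
    also have "Re (cnj Q * (of_real p * w' s)) = p * Re (cnj Q * w' s)"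
      by (simp add: algebra_simps)
    finally have "\<kappa> / p \<le> Re (cnj Q * w' s)"
      using \<open>p > 0\<close> by (simp add: divide_le_eq mult.commute)
    moreover have "\<kappa> * (1 / (1 + s)) \<le> \<kappa> * (1 / p)"
      using inverse_integrating_factor_ge[OF \<open>c \<ge> 1\<close> s1(2)] unfolding p_def \<kappa>_def
      by (intro mult_left_mono) auto
    ultimately show "Re (cnj Q * w' s) - \<kappa> / (1 + s) \<ge> 0" by simp
  qed (use \<open>y \<le> t\<close> in auto)
  then show ?thesis unfolding \<kappa>_def by (simp only: right_diff_distrib)
qed

lemma weighted_deriv_close_large_c:
  assumes sol: "flux_solution c \<mu> w w' w''" and "c \<ge> 1" and "B \<ge> 0"
    and B: "\<And>s. s \<in> {-1<..r} \<Longrightarrow> norm (w s) \<le> B" and r: "r \<in> {-1<..<1}"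
    and big: "4 * (norm \<mu> * B * integrating_factor c r / (2 * c))
                < norm (of_real (integrating_factor c r) * w' r)"
    and s: "s \<in> {-1<..r}"
  shows "norm (of_real (integrating_factor c s) * w' s - of_real (integrating_factor c r) * w' r)
           \<le> norm (of_real (integrating_factor c r) * w' r) / 4"
proof -
  define p where "p = integrating_factor c"
  have "norm (of_real (p r) * w' r - of_real (p s) * w' s) \<le> norm \<mu> * B * (p r - p s) / (2 * c)"
    unfolding p_def using s r \<open>c \<ge> 1\<close> by (intro weighted_deriv_diff_bound[OF sol _ B]) auto
  also have "\<dots> \<le> norm \<mu> * B * p r / (2 * c)"
    using integrating_factor_pos[of c s] \<open>B \<ge> 0\<close> \<open>c \<ge> 1\<close>
    by (auto simp: p_def intro!: divide_right_mono mult_left_mono)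
  also have "\<dots> \<le> norm (of_real (p r) * w' r) / 4" using big by (simp add: p_def)
  finally show ?thesis by (simp add: p_def norm_minus_commute)
qed

lemma flux_deriv_bound_large_c:
  assumes sol: "flux_solution c \<mu> w w' w''" and "c \<ge> 1" and "B \<ge> 0"
    and B: "\<And>s. s \<in> {-1<..r} \<Longrightarrow> norm (w s) \<le> B" and r: "r \<in> {-1<..<1}"
  shows "norm (w' r) \<le> 2 * norm \<mu> / c * B"
proof -
  define p where "p = integrating_factor c"
  define Q where "Q = of_real (p r) * w' r"
  have "p r > 0" unfolding p_def by (rule integrating_factor_pos)
  have "norm Q \<le> 4 * (norm \<mu> * B * p r / (2 * c))"
  proof (rule ccontr)
    assume big: "\<not> ?thesis"
    have close: "norm (of_real (p s) * w' s - Q) \<le> norm Q / 4" if "s \<in> {-1<..r}" for s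
      using weighted_deriv_close_large_c[OF sol \<open>c \<ge> 1\<close> \<open>B \<ge> 0\<close> B r _ that] big
      unfolding Q_def p_def by simp
    have "0 \<le> 4 * (norm \<mu> * B * p r / (2 * c))" using \<open>B \<ge> 0\<close> \<open>c \<ge> 1\<close> \<open>p r > 0\<close> by simp
    with big have "norm Q > 0" by linarith
    define \<kappa> where "\<kappa> = 3 / 4 * (norm Q)\<^sup>2"
    have "\<kappa> > 0" using \<open>norm Q > 0\<close> by (simp add: \<kappa>_def)
    define t where "t = min r 0"
    define M where "M = 2 * norm Q * B / \<kappa> + 1"
    define y where "y = (1 + t) * exp (- M) - 1"
    have "-1 < t" "t \<le> 0" "t \<le> r" using r by (auto simp: t_def)
    have "M \<ge> 0" using \<open>\<kappa> > 0\<close> \<open>B \<ge> 0\<close> by (simp add: M_def)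
    then have "(1 + t) * exp (- M) \<le> 1 + t"
      using mult_left_mono[of "exp (- M)" 1 "1 + t"] \<open>-1 < t\<close> by simp
    moreover have "0 < (1 + t) * exp (- M)" using \<open>-1 < t\<close> by simp
    ultimately have "-1 < y" "y \<le> t" unfolding y_def by linarith+
    have "ln (1 + y) = ln (1 + t) - M" using \<open>-1 < t\<close> by (simp add: y_def ln_mult)
    then have "\<kappa> * M \<le> Re (cnj Q * w t) - Re (cnj Q * w y)"
      using Re_flux_growth_large_c[OF sol \<open>c \<ge> 1\<close> _ \<open>t \<le> 0\<close> \<open>-1 < y\<close> \<open>y \<le> t\<close>] close \<open>t \<le> r\<close>
      unfolding \<kappa>_def p_def by fastforce
    also have "\<dots> \<le> 2 * norm Q * B"
    proof -
      have "\<bar>Re (cnj Q * w s)\<bar> \<le> norm Q * B" if "s \<in> {-1<..r}" for s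
        using abs_Re_le_cmod[of "cnj Q * w s"] mult_left_mono[OF B[OF that] norm_ge_zero[of Q]]
        by (simp add: norm_mult)
      from this[of t] this[of y] show ?thesis using \<open>-1 < y\<close> \<open>y \<le> t\<close> \<open>t \<le> r\<close> \<open>-1 < t\<close> by auto
    qed
    finally have "\<kappa> * M \<le> 2 * norm Q * B" .
    moreover have "\<kappa> * M = 2 * norm Q * B + \<kappa>" using \<open>\<kappa> > 0\<close> by (simp add: M_def field_simps)
    ultimately show False using \<open>\<kappa> > 0\<close> by simp
  qed
  moreover have "norm Q = p r * norm (w' r)" using \<open>p r > 0\<close> by (simp add: Q_def norm_mult)
  ultimately show ?thesis using \<open>p r > 0\<close> \<open>c \<ge> 1\<close> by (simp add: field_simps)
qed

lemma flux_deriv_exp_bound_large_c: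
  assumes sol: "flux_solution c \<mu> w w' w''" and "c \<ge> 1" and "B \<ge> 0" and K: "2 * norm \<mu> / c \<le> K"
    and bound: "\<And>s. s \<in> {-1<..<1} \<Longrightarrow> norm (w s) \<le> B * exp (2 * K * s)"
    and r: "r \<in> {-1<..<1}"
  shows "norm (w' r) \<le> K * B * exp (2 * K * r)"
proof -
  have "K \<ge> 0" using K \<open>c \<ge> 1\<close> order_trans[OF _ K] by simp
  have "norm (w s) \<le> B * exp (2 * K * r)" if "s \<in> {-1<..r}" for s
  proof -
    have "norm (w s) \<le> B * exp (2 * K * s)" using bound[of s] that r by auto
    also have "\<dots> \<le> B * exp (2 * K * r)"
      using that \<open>K \<ge> 0\<close> \<open>B \<ge> 0\<close> by (auto intro!: mult_left_mono)
    finally show ?thesis .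
  qed
  then have "norm (w' r) \<le> 2 * norm \<mu> / c * (B * exp (2 * K * r))"
    using \<open>B \<ge> 0\<close> by (intro flux_deriv_bound_large_c[OF sol \<open>c \<ge> 1\<close> _ _ r]) auto
  also have "\<dots> \<le> K * (B * exp (2 * K * r))" using K \<open>B \<ge> 0\<close> by (intro mult_right_mono) auto
  finally show ?thesis by simp
qed

lemma flux_solution_halving_large_c:
  assumes sol: "flux_solution c \<mu> w w' w''" and "c \<ge> 1" and "B \<ge> 0" and K: "2 * norm \<mu> / c \<le> K"
    and bound: "\<And>s. s \<in> {-1<..<1} \<Longrightarrow> norm (w s) \<le> B * exp (2 * K * s)"
    and t: "t \<in> {-1<..<1}"
  shows "norm (w t) \<le> B / 2 * exp (2 * K * t)"
proof -
  have deriv: "norm (w' r) \<le> K * B * exp (2 * K * r)" if "r \<in> {-1<..<1}" for r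
    using flux_deriv_exp_bound_large_c[OF sol \<open>c \<ge> 1\<close> \<open>B \<ge> 0\<close> K _ that] bound by blast
  have "norm (w t - w y) \<le> B / 2 * exp (2 * K * t)" if y: "-1 < y" "y \<le> t" for y
  proof -
    have "norm (w t - w y) \<le> B / 2 * exp (2 * K * t) - B / 2 * exp (2 * K * y)"
    proof (rule norm_diff_le_of_derivative_bound[OF \<open>y \<le> t\<close>, of w w'
          "\<lambda>s. B / 2 * exp (2 * K * s)" "\<lambda>s. K * B * exp (2 * K * s)"])
      fix s assume s: "s \<in> {y..t}"
      then have s1: "s \<in> {-1<..<1}" using y t by auto
      show "(w has_vector_derivative w' s) (at s)" using sol s1 unfolding flux_solution_def by auto
      show "((\<lambda>s. B / 2 * exp (2 * K * s)) has_real_derivative K * B * exp (2 * K * s)) (at s)"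
        by (auto intro!: derivative_eq_intros)
      show "norm (w' s) \<le> K * B * exp (2 * K * s)" by (rule deriv[OF s1])
    qed
    moreover have "B / 2 * exp (2 * K * y) \<ge> 0" using \<open>B \<ge> 0\<close> by simp
    ultimately show ?thesis by linarith
  qed
  then have "eventually (\<lambda>y. norm (w t - w y) \<le> B / 2 * exp (2 * K * t)) (at_right (-1))"
    unfolding eventually_at_right_field using t by (intro exI[of _ t]) auto
  moreover have "((\<lambda>y. norm (w t - w y)) \<longlongrightarrow> norm (w t - 0)) (at_right (-1))"
    using sol unfolding flux_solution_def by (intro tendsto_intros) auto
  ultimately show ?thesis
    by (intro tendsto_upperbound[of "\<lambda>y. norm (w t - w y)"])
        (auto simp: trivial_limit_at_right_real)
qed

lemma flux_solution_exp_bound_large_c: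
  assumes sol: "flux_solution c \<mu> w w' w''" and "c \<ge> 1"
    and B: "\<And>s. s \<in> {-1<..<1} \<Longrightarrow> norm (w s) \<le> B"
    and s: "s \<in> {-1<..<1}"
  shows "norm (w s) \<le> B * exp (4 * norm \<mu> / c) / 2 ^ n * exp (4 * norm \<mu> / c * s)"
  using s
proof (induction n arbitrary: s)
  case 0
  have "B \<ge> 0" using B[OF 0] by (simp add: order_trans[OF norm_ge_zero])
  have "norm (w s) \<le> B" by (rule B[OF 0])
  also have "\<dots> \<le> B * exp (4 * norm \<mu> / c * (s + 1))"
    using 0 \<open>B \<ge> 0\<close> \<open>c \<ge> 1\<close> by (simp add: mult_le_cancel_left1)
  also have "\<dots> = B * exp (4 * norm \<mu> / c) / 2 ^ 0 * exp (4 * norm \<mu> / c * s)"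
    by (simp only: distrib_left mult_1_right exp_add) (simp add: mult_ac)
  finally show ?case .
next
  case (Suc n)
  have "B \<ge> 0" using B[OF Suc.prems] by (simp add: order_trans[OF norm_ge_zero])
  have "norm (w s) \<le> B * exp (4 * norm \<mu> / c) / 2 ^ n / 2 * exp (2 * (2 * norm \<mu> / c) * s)"
    using \<open>B \<ge> 0\<close> Suc.IH
    by (intro flux_solution_halving_large_c[OF sol \<open>c \<ge> 1\<close> _ _ _ Suc.prems]) auto
  then show ?case by simp
qed

lemma flux_solution_eq_0_large_c:
  assumes sol: "flux_solution c \<mu> w w' w''" and "c \<ge> 1" and x: "x \<in> {-1<..<1}"
  shows "w x = 0"
proof (rule ccontr)
  assume "w x \<noteq> 0"
  obtain B where B: "\<And>s. s \<in> {-1<..<1} \<Longrightarrow> norm (w s) \<le> B"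
    using flux_solution_bounded[OF sol] by blast
  define C where "C = B * exp (4 * norm \<mu> / c) * exp (4 * norm \<mu> / c * x)"
  obtain n where n: "C / norm (w x) < 2 ^ n"
    using real_arch_pow[of 2 "C / norm (w x)"] by auto
  have "norm (w x) \<le> C / 2 ^ n"
    using flux_solution_exp_bound_large_c[OF sol \<open>c \<ge> 1\<close> B x, of n] by (simp add: C_def)
  then have "norm (w x) * 2 ^ n \<le> C" by (simp add: field_simps)
  moreover have "C < norm (w x) * 2 ^ n" using n \<open>w x \<noteq> 0\<close> by (simp add: field_simps)
  ultimately show False by simp
qed

section \<open>Polynomial eigenfunctions\<close>

text \<open>The monic polynomial V of degree k with
  (1 - x^2) V'' - (2 c + 4 x) V' + k (k + 3) V = 0, by its coefficients from the top:
  eigenpoly_top_coeff c k m is the coefficient of x^(k - m).\<close>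
fun eigenpoly_top_coeff :: "real \<Rightarrow> nat \<Rightarrow> nat \<Rightarrow> real" where
  "eigenpoly_top_coeff c k 0 = 1"
| "eigenpoly_top_coeff c k (Suc 0) = c * real k / (real k + 1)"
| "eigenpoly_top_coeff c k (Suc (Suc m)) =
     (2 * c * real (k - m - 1) * eigenpoly_top_coeff c k (Suc m)
       - real ((k - m) * (k - m - 1)) * eigenpoly_top_coeff c k m)
     / (real (m + 2) * real (2 * k + 1 - m))"

definition eigenpoly_coeff :: "real \<Rightarrow> nat \<Rightarrow> nat \<Rightarrow> real" where
  "eigenpoly_coeff c k j = (if j \<le> k then eigenpoly_top_coeff c k (k - j) else 0)"

lemma eigenpoly_coeff_recurrence:
  "real ((j + 2) * (j + 1)) * eigenpoly_coeff c k (j + 2)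
      - 2 * c * real (j + 1) * eigenpoly_coeff c k (j + 1)
     + real (k - j) * real (k + j + 3) * eigenpoly_coeff c k j = 0"
proof -
  consider "k \<le> j" | "j + 1 = k" | "j + 2 \<le> k" by linarith
  then show ?thesis
  proof cases
    case 1 then show ?thesis by (auto simp: eigenpoly_coeff_def)
  next
    case 2
    then have "eigenpoly_coeff c (j + 1) (j + 2) = 0" "eigenpoly_coeff c (j + 1) (j + 1) = 1"
      "eigenpoly_coeff c (j + 1) j = c * (real j + 1) / (real j + 2)"
      by (auto simp: eigenpoly_coeff_def add.commute)
    then show ?thesis unfolding 2[symmetric] by (simp add: field_simps)
  next
    case 3
    define m where "m = k - j - 2"
    have idx: "k - j = Suc (Suc m)" "k - (j + 1) = Suc m" "k - (j + 2) = m"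
      "k - m - 1 = j + 1" "k - m = j + 2" "2 * k + 1 - m = k + j + 3" using 3 by (auto simp: m_def)
    define D where "D = real (m + 2) * real (2 * k + 1 - m)"
    define N where "N = 2 * c * real (k - m - 1) * eigenpoly_top_coeff c k (Suc m)
          - real ((k - m) * (k - m - 1)) * eigenpoly_top_coeff c k m"
    have "D \<noteq> 0" using 3 by (simp add: D_def m_def)
    moreover have "eigenpoly_top_coeff c k (Suc (Suc m)) = N / D"
      unfolding N_def D_def by (simp only: eigenpoly_top_coeff.simps)
    ultimately have "D * eigenpoly_top_coeff c k (Suc (Suc m)) = N" by simp
    moreover have "eigenpoly_coeff c k j = eigenpoly_top_coeff c k (Suc (Suc m))"
      "eigenpoly_coeff c k (j + 1) = eigenpoly_top_coeff c k (Suc m)"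
      "eigenpoly_coeff c k (j + 2) = eigenpoly_top_coeff c k m"
      using 3 idx by (auto simp: eigenpoly_coeff_def)
    ultimately show ?thesis unfolding D_def N_def idx by (simp add: algebra_simps)
  qed
qed

definition eigenpoly :: "real \<Rightarrow> nat \<Rightarrow> real poly" where
  "eigenpoly c k = Poly (map (eigenpoly_coeff c k) [0..<Suc k])"

lemma coeff_eigenpoly: "coeff (eigenpoly c k) j = eigenpoly_coeff c k j"
  by (cases "j < Suc k") (simp_all add: eigenpoly_def nth_default_def eigenpoly_coeff_def
      del: upt_Suc)

lemma eigenpoly_nonzero: "eigenpoly c k \<noteq> 0"
proof -
  have "coeff (eigenpoly c k) k = 1" by (simp add: coeff_eigenpoly eigenpoly_coeff_def)
  then show ?thesis by auto
qed

lemma eigenpoly_ode: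
  "(1 - x\<^sup>2) * poly (pderiv (pderiv (eigenpoly c k))) x
      - (2 * c + 4 * x) * poly (pderiv (eigenpoly c k)) x
     + real (k * (k + 3)) * poly (eigenpoly c k) x = 0"
proof -
  define p where "p = eigenpoly c k"
  define Q where "Q = pderiv (pderiv p) - monom 1 2 * pderiv (pderiv p) - smult (2 * c) (pderiv p)
      - monom 4 1 * pderiv p + smult (real (k * (k + 3))) p"
  note coeff_Q = Q_def p_def coeff_diff coeff_add coeff_smult
      coeff_monom_mult coeff_pderiv coeff_eigenpoly
  have "coeff Q j = 0" for j
  proof (cases "j \<le> k")
    case False
    then show ?thesis unfolding coeff_Q by (simp add: eigenpoly_coeff_def)
  next
    case True
    note rec = eigenpoly_coeff_recurrence[of j c k]
    have kj: "real (k - j) * real (k + j + 3) = real (k * (k + 3)) - real j * real j - 3 * real j"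
      using True by (simp add: of_nat_diff algebra_simps)
    consider "j = 0" | "j = 1" | i where "j = Suc (Suc i)" by (metis One_nat_def not0_implies_Suc)
    then show ?thesis
    proof cases
      case 1 then show ?thesis using rec kj unfolding coeff_Q by (simp add: algebra_simps)
    next
      case 2
      have "real (k - Suc 0) = real k - 1" using True 2 by (simp add: of_nat_diff)
      then show ?thesis using rec kj 2 unfolding coeff_Q by (simp add: algebra_simps)
    next
      case 3
      have "real (k - Suc (Suc i)) = real k - real i - 2" using True 3 by (simp add: of_nat_diff)
      then show ?thesis using rec kj 3 unfolding coeff_Q by (simp add: algebra_simps)
    qed
  qed
  then have "Q = 0" by (simp add: poly_eq_iff)
  then have "poly Q x = 0" by simp
  then show ?thesis unfolding Q_def p_def by (simp add: poly_monom algebra_simps power2_eq_square)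
qed

definition jacobi_weight :: "real \<Rightarrow> real \<Rightarrow> real" where
  "jacobi_weight c x = exp ((1 - c) * ln (1 + x) + (1 + c) * ln (1 - x))"

definition jacobi_weight_logderiv :: "real \<Rightarrow> real \<Rightarrow> real" where
  "jacobi_weight_logderiv c x = (1 - c) / (1 + x) - (1 + c) / (1 - x)"

definition jacobi_weight_logderiv2 :: "real \<Rightarrow> real \<Rightarrow> real" where
  "jacobi_weight_logderiv2 c x = - (1 - c) / (1 + x)\<^sup>2 - (1 + c) / (1 - x)\<^sup>2"

definition eigenflux :: "real \<Rightarrow> nat \<Rightarrow> real \<Rightarrow> real" where
  "eigenflux c k x = jacobi_weight c x * poly (eigenpoly c k) x"

definition eigenflux_d1 :: "real \<Rightarrow> nat \<Rightarrow> real \<Rightarrow> real" where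
  "eigenflux_d1 c k x = jacobi_weight c x *
     (jacobi_weight_logderiv c x * poly (eigenpoly c k) x + poly (pderiv (eigenpoly c k)) x)"

definition eigenflux_d2 :: "real \<Rightarrow> nat \<Rightarrow> real \<Rightarrow> real" where
  "eigenflux_d2 c k x = jacobi_weight c x *
     (jacobi_weight_logderiv c x *
        (jacobi_weight_logderiv c x * poly (eigenpoly c k) x + poly (pderiv (eigenpoly c k)) x)
      + jacobi_weight_logderiv2 c x * poly (eigenpoly c k) x
      + jacobi_weight_logderiv c x * poly (pderiv (eigenpoly c k)) x
      + poly (pderiv (pderiv (eigenpoly c k))) x)"

lemma jacobi_weight_has_derivative:
  assumes "x \<in> {-1<..<1}"
  shows "(jacobi_weight c has_real_derivative
        jacobi_weight c x * jacobi_weight_logderiv c x) (at x)"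
proof -
  have "(jacobi_weight c has_real_derivative
          jacobi_weight c x * ((1 - c) * (1 / (1 + x)) + (1 + c) * (- 1 / (1 - x)))) (at x)"
    unfolding jacobi_weight_def using assms by (auto intro!: derivative_eq_intros)
  then show ?thesis by (simp add: jacobi_weight_logderiv_def)
qed

lemma jacobi_weight_logderiv_has_derivative:
  assumes "x \<in> {-1<..<1}"
  shows "(jacobi_weight_logderiv c has_real_derivative jacobi_weight_logderiv2 c x) (at x)"
proof -
  have "1 + x \<noteq> 0" "1 - x \<noteq> 0" using assms by auto
  then have "(jacobi_weight_logderiv c has_real_derivative
      - ((1 - c) * 1) / (1 + x)\<^sup>2 - (- ((1 + c) * (- 1)) / (1 - x)\<^sup>2)) (at x)"
    unfolding jacobi_weight_logderiv_def
      by (auto intro!: derivative_eq_intros simp: power2_eq_square)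
  moreover have "- ((1 - c) * 1) / (1 + x)\<^sup>2 - (- ((1 + c) * (- 1)) / (1 - x)\<^sup>2)
      = jacobi_weight_logderiv2 c x"
    unfolding jacobi_weight_logderiv2_def by simp
  ultimately show ?thesis by simp
qed

lemma eigenflux_has_derivative:
  assumes "x \<in> {-1<..<1}"
  shows "(eigenflux c k has_real_derivative eigenflux_d1 c k x) (at x)"
    and "(eigenflux_d1 c k has_real_derivative eigenflux_d2 c k x) (at x)"
  unfolding eigenflux_def[abs_def] eigenflux_d1_def[abs_def] eigenflux_d2_def
  by (auto intro!: derivative_eq_intros jacobi_weight_has_derivative[OF assms]
      jacobi_weight_logderiv_has_derivative[OF assms] simp: algebra_simps)

lemma eigenflux_ode:
  assumes "x \<in> {-1<..<1}"
  shows "(1 - x\<^sup>2) * eigenflux_d2 c k x + 2 * c * eigenflux_d1 c k x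
           = - real ((k + 1) * (k + 2)) * eigenflux c k x"
proof -
  define A where "A = 1 / (1 + x)"
  define B where "B = 1 / (1 - x)"
  define r where "r = jacobi_weight_logderiv c x"
  define r' where "r' = jacobi_weight_logderiv2 c x"
  define V where "V = poly (eigenpoly c k) x"
  define V' where "V' = poly (pderiv (eigenpoly c k)) x"
  define V'' where "V'' = poly (pderiv (pderiv (eigenpoly c k))) x"
  have "(1 + x) * A = 1" "(1 - x) * B = 1" using assms by (auto simp: A_def B_def)
  moreover have "r = (1 - c) * A - (1 + c) * B" "r' = - (1 - c) * A * A - (1 + c) * B * B"
    by (simp_all add: r_def r'_def A_def B_def jacobi_weight_logderiv_def
        jacobi_weight_logderiv2_def
        power2_eq_square)
  ultimately have r: "(1 - x\<^sup>2) * r = - 2 * c - 2 * x"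
    and r': "(1 - x\<^sup>2) * (r * r + r') + 2 * c * r = - 2"
    by algebra+
  have V: "(1 - x\<^sup>2) * V'' = (2 * c + 4 * x) * V' - real (k * (k + 3)) * V"
    using eigenpoly_ode[of x c k] by (simp add: V_def V'_def V''_def algebra_simps)
  have "(1 - x\<^sup>2) * eigenflux_d2 c k x + 2 * c * eigenflux_d1 c k x
      = jacobi_weight c x * (V * ((1 - x\<^sup>2) * (r * r + r') + 2 * c * r)
          + V' * (2 * ((1 - x\<^sup>2) * r) + 2 * c) + (1 - x\<^sup>2) * V'')"
    by (simp add: eigenflux_d1_def eigenflux_d2_def r_def r'_def V_def V'_def V''_def algebra_simps)
  also have "\<dots> = jacobi_weight c x * (V * (- 2) + V' * (2 * (- 2 * c - 2 * x) + 2 * c)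
          + ((2 * c + 4 * x) * V' - real (k * (k + 3)) * V))"
    unfolding r r' V ..
  also have "\<dots> = - real ((k + 1) * (k + 2)) * eigenflux c k x"
    by (simp add: eigenflux_def V_def algebra_simps)
  finally show ?thesis .
qed

lemma eigenflux_tendsto_0:
  assumes "0 \<le> c" "c < 1"
  shows "(eigenflux c k \<longlongrightarrow> 0) (at_right (-1))" "(eigenflux c k \<longlongrightarrow> 0) (at_left 1)"
proof -
  have eq: "eigenflux c k = (\<lambda>x. exp ((1 - c) * ln (1 + x))
      * exp ((1 + c) * ln (1 - x)) * poly (eigenpoly c k) x)"
    by (simp add: fun_eq_iff eigenflux_def jacobi_weight_def exp_add)
  have poly: "((\<lambda>x. poly (eigenpoly c k) x) \<longlongrightarrow> poly (eigenpoly c k) a) (at a within S)" for a S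
    by (intro tendsto_intros)
  have right: "((\<lambda>x. 1 + x) \<longlongrightarrow> 0) (at_right (-1::real))"
      "eventually (\<lambda>x. 1 + x > 0) (at_right (-1::real))"
    by (auto intro!: tendsto_eq_intros simp: eventually_at_right_field intro: exI[of _ 0])
  have left: "((\<lambda>x. 1 - x) \<longlongrightarrow> 0) (at_left (1::real))"
      "eventually (\<lambda>x. 1 - x > 0) (at_left (1::real))"
    by (auto intro!: tendsto_eq_intros simp: eventually_at_left_field intro: exI[of _ 0])
  have "(eigenflux c k \<longlongrightarrow> 0 * exp ((1 + c) * ln (1 - (-1))) * poly (eigenpoly c k) (-1))
      (at_right (-1))"
    unfolding eq using assms by (intro tendsto_intros tendsto_exp_mult_ln_0 right poly) auto
  then show "(eigenflux c k \<longlongrightarrow> 0) (at_right (-1))" by simp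
  have "(eigenflux c k \<longlongrightarrow> exp ((1 - c) * ln (1 + 1)) * 0 * poly (eigenpoly c k) 1) (at_left 1)"
    unfolding eq using assms by (intro tendsto_intros tendsto_exp_mult_ln_0 left poly) auto
  then show "(eigenflux c k \<longlongrightarrow> 0) (at_left 1)" by simp
qed

lemma eigenflux_continuous_on: "continuous_on {-1<..<1} (eigenflux c k)"
  using eigenflux_has_derivative(1)
  by (meson DERIV_isCont continuous_at_imp_continuous_on)

lemma eigenflux_weighted_square_eq:
  assumes x: "x \<in> {-1<..<1}"
  shows "(1 - x\<^sup>2) * (eigenflux c k x / (1 - x\<^sup>2))\<^sup>2
           = (1 + x) powr (1 - 2 * c) * exp ((1 + 2 * c) * ln (1 - x)) * (poly (eigenpoly c k) x)\<^sup>2"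
proof -
  define V where "V = poly (eigenpoly c k) x"
  have "1 + x > 0" "1 - x > 0" using x by auto
  have "d * (W / d)\<^sup>2 = W\<^sup>2 / d" if "d \<noteq> 0" for d W :: real
    using that by (simp add: power2_eq_square)
  moreover have "1 - x\<^sup>2 = (1 + x) * (1 - x)" by (simp add: power2_eq_square algebra_simps)
  ultimately have "(1 - x\<^sup>2) * (eigenflux c k x / (1 - x\<^sup>2))\<^sup>2
      = (eigenflux c k x)\<^sup>2 / ((1 + x) * (1 - x))"
    using \<open>1 + x > 0\<close> \<open>1 - x > 0\<close> by simp
  also have "\<dots> = exp (2 * ((1 - c) * ln (1 + x) + (1 + c) * ln (1 - x)))
      / exp (ln (1 + x) + ln (1 - x)) * V\<^sup>2"
  proof -
    have F1: "(1 + x) * (1 - x) = exp (ln (1 + x) + ln (1 - x))"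
      using \<open>1 + x > 0\<close> \<open>1 - x > 0\<close> by (simp add: exp_add)
    have "(jacobi_weight c x)\<^sup>2 = exp (2 * ((1 - c) * ln (1 + x) + (1 + c) * ln (1 - x)))"
      unfolding jacobi_weight_def mult_2 exp_add power2_eq_square ..
    then have F2: "(eigenflux c k x)\<^sup>2 = exp (2 * ((1 - c) * ln (1 + x) + (1 + c) * ln (1 - x)))
        * V\<^sup>2"
      by (simp add: eigenflux_def V_def power_mult_distrib)
    show ?thesis unfolding F1 F2 by (simp only: times_divide_eq_left)
  qed
  also have "\<dots> = (1 + x) powr (1 - 2 * c) * exp ((1 + 2 * c) * ln (1 - x)) * V\<^sup>2"
    using \<open>1 + x > 0\<close> by (simp add: powr_def flip: exp_diff exp_add) (simp add: algebra_simps)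
  finally show ?thesis by (simp add: V_def)
qed

lemma eigenflux_square_bound:
  assumes "0 \<le> c"
  obtains C where "\<And>x. x \<in> {-1<..<1} \<Longrightarrow>
    (1 - x\<^sup>2) * (eigenflux c k x / (1 - x\<^sup>2))\<^sup>2 \<le> C * (1 + x) powr (1 - 2 * c)"
proof -
  have "compact (poly (eigenpoly c k) ` {-1..1})"
    by (intro compact_continuous_image continuous_intros) simp
  then obtain M where M: "\<And>x. x \<in> {-1..1} \<Longrightarrow> \<bar>poly (eigenpoly c k) x\<bar> \<le> M"
    using compact_imp_bounded bounded_iff by (metis image_eqI real_norm_def)
  define C where "C = exp ((1 + 2 * c) * ln 2) * M\<^sup>2"
  have "exp ((1 + 2 * c) * ln (1 - x)) * (poly (eigenpoly c k) x)\<^sup>2 \<le> C" if x: "x \<in> {-1<..<1}" for x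
  proof -
    have "exp ((1 + 2 * c) * ln (1 - x)) \<le> exp ((1 + 2 * c) * ln 2)"
      using x assms by (auto intro!: mult_left_mono)
    moreover have "\<bar>poly (eigenpoly c k) x\<bar> \<le> \<bar>M\<bar>" using M[of x] x by auto
    then have "(poly (eigenpoly c k) x)\<^sup>2 \<le> M\<^sup>2" by (simp only: abs_le_square_iff)
    ultimately show ?thesis unfolding C_def by (intro mult_mono) auto
  qed
  then have "(1 - x\<^sup>2) * (eigenflux c k x / (1 - x\<^sup>2))\<^sup>2 \<le> C * (1 + x) powr (1 - 2 * c)"
    if "x \<in> {-1<..<1}" for x
    unfolding eigenflux_weighted_square_eq[OF that] mult.assoc
    using mult_left_mono[of _ C "(1 + x) powr (1 - 2 * c)"] that by (simp add: mult.commute)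
  then show ?thesis using that by blast
qed

lemma eigenflux_square_integrable:
  assumes "0 \<le> c" "c < 1"
  shows "(\<lambda>x. (1 - x\<^sup>2) * (cmod (of_real (eigenflux c k x / (1 - x\<^sup>2))))\<^sup>2) integrable_on {-1<..<1}"
    (is "?f integrable_on _")
proof -
  obtain C where C: "\<And>x. x \<in> {-1<..<1} \<Longrightarrow>
      (1 - x\<^sup>2) * (eigenflux c k x / (1 - x\<^sup>2))\<^sup>2 \<le> C * (1 + x) powr (1 - 2 * c)"
    using eigenflux_square_bound[OF \<open>0 \<le> c\<close>] by blast
  show ?thesis
  proof (rule measurable_bounded_by_integrable_imp_integrable)
    show "(\<lambda>x. C * (1 + x) powr (1 - 2 * c)) integrable_on {-1<..<1}"
      using \<open>c < 1\<close> by (intro integrable_on_mult_right powr_1_plus_integrable_on) auto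
    have "continuous_on {-1<..<1} ?f"
      using eigenflux_continuous_on by (intro continuous_intros) (auto simp: abs_square_eq_1)
    then show "?f \<in> borel_measurable (lebesgue_on {-1<..<1})"
      by (rule continuous_imp_measurable_on_sets_lebesgue) simp
    fix x :: real assume x: "x \<in> {-1<..<1}"
    have "?f x \<ge> 0" using square_less_1_of_mem[OF x] by simp
    then have "norm (?f x) = ?f x" by simp
    also have "\<dots> = (1 - x\<^sup>2) * (eigenflux c k x / (1 - x\<^sup>2))\<^sup>2"
      by (simp only: norm_of_real power2_abs)
    finally show "norm (?f x) \<le> C * (1 + x) powr (1 - 2 * c)" using C[OF x] by simp
  qed simp
qed

lemma in_X_eigenflux:
  assumes "0 \<le> c" "c < 1"
  shows "in_X (\<lambda>x. of_real (eigenflux c k x / (1 - x\<^sup>2)))"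
  unfolding in_X_def
proof (intro conjI eigenflux_square_integrable[OF assms])
  have ev: "\<forall>\<^sub>F x in at_right (-1). complex_of_real (eigenflux c k x)
      = of_real (1 - x\<^sup>2) * of_real (eigenflux c k x / (1 - x\<^sup>2))"
    "\<forall>\<^sub>F x in at_left 1. complex_of_real (eigenflux c k x)
      = of_real (1 - x\<^sup>2) * of_real (eigenflux c k x / (1 - x\<^sup>2))"
    unfolding eventually_at_right_field eventually_at_left_field
    by (intro exI[of _ 1] exI[of _ "-1"] conjI allI impI
        of_real_1_minus_square_mult_div[symmetric]; simp)+
  show "((\<lambda>x. complex_of_real (1 - x\<^sup>2) * of_real (eigenflux c k x / (1 - x\<^sup>2))) \<longlongrightarrow> 0)
      (at_right (-1))"
    by (rule Lim_transform_eventually[OF tendsto_of_real[OF eigenflux_tendsto_0(1)[OF assms]] ev(1),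
          unfolded of_real_0])
  show "((\<lambda>x. complex_of_real (1 - x\<^sup>2) * of_real (eigenflux c k x / (1 - x\<^sup>2))) \<longlongrightarrow> 0)
      (at_left 1)"
    by (rule Lim_transform_eventually[OF tendsto_of_real[OF eigenflux_tendsto_0(2)[OF assms]] ev(2),
          unfolded of_real_0])
qed

lemma nonconstant_if_deriv_nonzero:
  assumes "\<And>x. x \<in> {-1<..<1} \<Longrightarrow> (Psi has_vector_derivative dPsi x) (at x)"
    and x0: "x0 \<in> {-1<..<1}" "dPsi x0 \<noteq> 0"
  shows "nonconstant Psi"
  unfolding nonconstant_def
proof
  assume "\<exists>a. \<forall>x\<in>{-1<..<1::real}. Psi x = a"
  then obtain a where a: "\<And>x. x \<in> {-1<..<1} \<Longrightarrow> Psi x = a" by blast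
  have "((\<lambda>_. a) has_vector_derivative dPsi x0) (at x0)"
    using assms(1)[OF x0(1)]
      by (rule has_vector_derivative_transform_within_open[of _ _ _ "{-1<..<1}"])
      (use x0 a in auto)
  then show False using vector_derivative_unique_at[OF _ has_vector_derivative_const] x0 by blast
qed

lemma solves_eigenflux:
  assumes "0 \<le> c" "c < 1"
    and Psi: "\<And>x. x \<in> {-1<..<1} \<Longrightarrow>
      (Psi has_vector_derivative of_real (eigenflux c k x / (1 - x\<^sup>2))) (at x)"
  shows "solves (2 * c) (- of_nat ((k + 1) * (k + 2))) Psi"
  unfolding solves_def
proof (intro exI conjI ballI)
  show "in_X (\<lambda>x. of_real (eigenflux c k x / (1 - x\<^sup>2)))" by (rule in_X_eigenflux[OF assms(1,2)])
  fix x :: real assume x: "x \<in> {-1<..<1}"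
  have "1 - x\<^sup>2 \<noteq> 0" using square_less_1_of_mem[OF x] by simp
  show "(Psi has_vector_derivative of_real (eigenflux c k x / (1 - x\<^sup>2))) (at x)" by (rule Psi[OF x])
  show "((\<lambda>t. complex_of_real (1 - t\<^sup>2) * of_real (eigenflux c k t / (1 - t\<^sup>2))) has_vector_derivative
      of_real (eigenflux_d1 c k x)) (at x)"
  proof (rule has_vector_derivative_transform_within_open[of _ _ _ "{-1<..<1}"])
    show "((\<lambda>t. complex_of_real (eigenflux c k t))
          has_vector_derivative of_real (eigenflux_d1 c k x)) (at x)"
      by (rule has_vector_derivative_of_real[OF eigenflux_has_derivative(1)[OF x]])
  qed (use x of_real_1_minus_square_mult_div in auto)
  show "((\<lambda>t. complex_of_real (eigenflux_d1 c k t))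
        has_vector_derivative of_real (eigenflux_d2 c k x)) (at x)"
    by (rule has_vector_derivative_of_real[OF eigenflux_has_derivative(2)[OF x]])
  have "eigenflux_d2 c k x + 2 * c / (1 - x\<^sup>2) * eigenflux_d1 c k x
      = ((1 - x\<^sup>2) * eigenflux_d2 c k x + 2 * c * eigenflux_d1 c k x) / (1 - x\<^sup>2)"
    using \<open>1 - x\<^sup>2 \<noteq> 0\<close> by (simp add: field_simps)
  also have "\<dots> = - real ((k + 1) * (k + 2)) * (eigenflux c k x / (1 - x\<^sup>2))"
    unfolding eigenflux_ode[OF x] by simp
  finally have "complex_of_real (eigenflux_d2 c k x + 2 * c / (1 - x\<^sup>2) * eigenflux_d1 c k x)
      = of_real (- real ((k + 1) * (k + 2)) * (eigenflux c k x / (1 - x\<^sup>2)))"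
    by (rule arg_cong)
  then show "complex_of_real (eigenflux_d2 c k x)
        + complex_of_real (2 * c / (1 - x\<^sup>2)) * of_real (eigenflux_d1 c k x)
      = - of_nat ((k + 1) * (k + 2)) * of_real (eigenflux c k x / (1 - x\<^sup>2))"
    by (simp only: of_real_add of_real_mult of_real_minus of_real_of_nat_eq)
qed

lemma eigenfunction_exists:
  assumes "0 \<le> \<epsilon>" "\<epsilon> < 2" "n \<ge> 1"
  obtains Psi where "solves \<epsilon> (- of_nat (n * (n + 1))) Psi" "nonconstant Psi"
proof -
  define c where "c = \<epsilon> / 2"
  define k where "k = n - 1"
  have "0 \<le> c" "c < 1" "\<epsilon> = 2 * c" "n * (n + 1) = (k + 1) * (k + 2)"
    using assms by (auto simp: c_def k_def)
  define dPsi where "dPsi x = complex_of_real (eigenflux c k x / (1 - x\<^sup>2))" for x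
  have "isCont dPsi x" if "x \<in> {-1<..<1}" for x
    using that square_less_1_of_mem[OF that] DERIV_isCont[OF eigenflux_has_derivative(1)[OF that]]
    unfolding dPsi_def by (intro continuous_intros) auto
  then obtain Psi where Psi: "\<And>x. x \<in> {-1<..<1} \<Longrightarrow> (Psi has_vector_derivative dPsi x) (at x)"
    using einterval_antiderivative[of "-1" 1 dPsi] by (auto simp: one_ereal_def)
  have "finite {x. poly (eigenpoly c k) x = 0}" by (rule poly_roots_finite[OF eigenpoly_nonzero])
  moreover have "infinite {-1<..<1::real}" by simp
  ultimately have "\<not> {-1<..<1::real} \<subseteq> {x. poly (eigenpoly c k) x = 0}"
    using finite_subset by blast
  then obtain x0 where x0: "x0 \<in> {-1<..<1}" "poly (eigenpoly c k) x0 \<noteq> 0" by blast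
  have "jacobi_weight c x0 > 0" by (simp add: jacobi_weight_def)
  then have "dPsi x0 \<noteq> 0"
    using x0 square_less_1_of_mem[OF x0(1)]
    by (simp only: dPsi_def of_real_eq_0_iff) (simp add: eigenflux_def)
  then show ?thesis
    using that solves_eigenflux[OF \<open>0 \<le> c\<close> \<open>c < 1\<close> Psi[unfolded dPsi_def]]
      nonconstant_if_deriv_nonzero[OF Psi x0(1)]
    unfolding \<open>\<epsilon> = 2 * c\<close> \<open>n * (n + 1) = (k + 1) * (k + 2)\<close> by blast
qed

section \<open>The eigenvalue problem\<close>

lemma solves_imp_flux_solution:
  assumes "solves \<epsilon> \<mu> Psi"
  obtains dPsi Phi dPhi where "flux_solution (\<epsilon> / 2) \<mu> (\<lambda>x. of_real (1 - x\<^sup>2) * dPsi x) Phi dPhi"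
    "\<And>x. x \<in> {-1<..<1} \<Longrightarrow> (Psi has_vector_derivative dPsi x) (at x)"
proof -
  obtain dPsi Phi dPhi where X: "in_X dPsi" and H: "\<And>x. x \<in> {-1<..<1} \<Longrightarrow>
      (Psi has_vector_derivative dPsi x) (at x) \<and>
      ((\<lambda>t. complex_of_real (1 - t\<^sup>2) * dPsi t) has_vector_derivative Phi x) (at x) \<and>
      (Phi has_vector_derivative dPhi x) (at x) \<and>
      dPhi x + complex_of_real (\<epsilon> / (1 - x\<^sup>2)) * Phi x = \<mu> * dPsi x"
    using assms unfolding solves_def by blast
  have "flux_solution (\<epsilon> / 2) \<mu> (\<lambda>x. of_real (1 - x\<^sup>2) * dPsi x) Phi dPhi"
    unfolding flux_solution_def
  proof (intro conjI ballI)
    fix x :: real assume x: "x \<in> {-1<..<1}"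
    show "((\<lambda>t. complex_of_real (1 - t\<^sup>2) * dPsi t) has_vector_derivative Phi x) (at x)"
      "(Phi has_vector_derivative dPhi x) (at x)" using H[OF x] by auto
    have "complex_of_real (1 - x\<^sup>2) * complex_of_real (\<epsilon> / (1 - x\<^sup>2)) = of_real (2 * (\<epsilon> / 2))"
      using of_real_1_minus_square_mult_div[OF x, of \<epsilon>] by simp
    then have "of_real (1 - x\<^sup>2) * (dPhi x + of_real (\<epsilon> / (1 - x\<^sup>2)) * Phi x)
        = of_real (1 - x\<^sup>2) * dPhi x + of_real (2 * (\<epsilon> / 2)) * Phi x"
      by (simp only: distrib_left mult.assoc[symmetric])
    moreover have "dPhi x + of_real (\<epsilon> / (1 - x\<^sup>2)) * Phi x = \<mu> * dPsi x" using H[OF x] by blast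
    ultimately show "of_real (1 - x\<^sup>2) * dPhi x + of_real (2 * (\<epsilon> / 2)) * Phi x
        = \<mu> * (of_real (1 - x\<^sup>2) * dPsi x)"
      by (metis mult.left_commute)
  qed (use X in \<open>auto simp: in_X_def\<close>)
  then show ?thesis using that H by blast
qed

lemma affine_if_flux_eq:
  fixes Psi Psi0 dPsi dPsi0 :: "real \<Rightarrow> complex"
  assumes "\<And>x. x \<in> {-1<..<1} \<Longrightarrow> (Psi has_vector_derivative dPsi x) (at x)"
    and "\<And>x. x \<in> {-1<..<1} \<Longrightarrow> (Psi0 has_vector_derivative dPsi0 x) (at x)"
    and eq: "\<And>x. x \<in> {-1<..<1} \<Longrightarrow> of_real (1 - x\<^sup>2) * dPsi x = a * (of_real (1 - x\<^sup>2) * dPsi0 x)"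
  shows "\<exists>c. \<forall>x\<in>{-1<..<1}. Psi x = a * Psi0 x + c"
proof -
  have "((\<lambda>x. Psi x - a * Psi0 x) has_vector_derivative 0) (at x within {-1<..<1})"
    if x: "x \<in> {-1<..<1}" for x
  proof -
    have "complex_of_real (1 - x\<^sup>2) \<noteq> 0" by (rule of_real_1_minus_square_neq_0[OF x])
    moreover have "complex_of_real (1 - x\<^sup>2) * (dPsi x - a * dPsi0 x) = 0"
      using eq[OF x] by (simp add: algebra_simps)
    ultimately have "dPsi x - a * dPsi0 x = 0" by simp
    then show ?thesis
      using has_vector_derivative_diff[OF assms(1)[OF x]
            has_vector_derivative_mult_right[OF assms(2)[OF x], of a]]
      by (auto intro: has_vector_derivative_at_within)
  qed
  then obtain c where "\<And>x. x \<in> {-1<..<1} \<Longrightarrow> Psi x - a * Psi0 x = c"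
    using has_vector_derivative_zero_constant[of "{-1<..<1}" "\<lambda>x. Psi x - a * Psi0 x"] by auto
  then have "\<forall>x\<in>{-1<..<1}. Psi x = a * Psi0 x + c" by (simp add: diff_eq_eq add.commute)
  then show ?thesis by blast
qed

lemma constant_if_flux_eq_0:
  fixes Psi dPsi :: "real \<Rightarrow> complex"
  assumes d: "\<And>x. x \<in> {-1<..<1} \<Longrightarrow> (Psi has_vector_derivative dPsi x) (at x)"
    and "\<And>x. x \<in> {-1<..<1} \<Longrightarrow> of_real (1 - x\<^sup>2) * dPsi x = 0"
  shows "\<not> nonconstant Psi"
proof -
  obtain c where "\<forall>x\<in>{-1<..<1}. Psi x = 0 * Psi x + c"
    using affine_if_flux_eq[OF d d, of 0] assms(2) by auto
  then show ?thesis by (auto simp: nonconstant_def)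
qed

lemma nonconstant_solution_resonant:
  assumes "0 \<le> \<epsilon>" "\<epsilon> < 2" "solves \<epsilon> \<mu> Psi" "nonconstant Psi"
  obtains k where "\<mu> = - of_nat ((k + 1) * (k + 2))"
proof -
  obtain dPsi Phi dPhi where sol: "flux_solution (\<epsilon> / 2) \<mu> (\<lambda>x. of_real (1 - x\<^sup>2) * dPsi x) Phi dPhi"
    and d: "\<And>x. x \<in> {-1<..<1} \<Longrightarrow> (Psi has_vector_derivative dPsi x) (at x)"
    using solves_imp_flux_solution[OF assms(3)] by blast
  show ?thesis
  proof (rule ccontr)
    assume "\<not> ?thesis"
    then have "\<mu> + of_nat ((j + 1) * (j + 2)) \<noteq> 0" for j
      using that by (metis add_eq_0_iff2 minus_equation_iff)
    then have "of_real (1 - x\<^sup>2) * dPsi x = 0" if "x \<in> {-1<..<1}" for x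
      using flux_solution_eq_0_if_resonant_moments_eq_0[OF sol _ _ _ that] assms(1,2) by auto
    then show False using constant_if_flux_eq_0[OF d] assms(4) by blast
  qed
qed

lemma solution_constant_large_eps:
  assumes "2 \<le> \<epsilon>" "solves \<epsilon> \<mu> Psi"
  shows "\<not> nonconstant Psi"
proof -
  obtain dPsi Phi dPhi where sol: "flux_solution (\<epsilon> / 2) \<mu> (\<lambda>x. of_real (1 - x\<^sup>2) * dPsi x) Phi dPhi"
    and d: "\<And>x. x \<in> {-1<..<1} \<Longrightarrow> (Psi has_vector_derivative dPsi x) (at x)"
    using solves_imp_flux_solution[OF assms(2)] by blast
  have "of_real (1 - x\<^sup>2) * dPsi x = 0" if "x \<in> {-1<..<1}" for x
    using flux_solution_eq_0_large_c[OF sol _ that] assms(1) by simp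
  then show ?thesis using constant_if_flux_eq_0[OF d] by blast
qed

lemma solution_constant_mu_0:
  assumes "0 \<le> \<epsilon>" "\<epsilon> < 2" "solves \<epsilon> 0 Psi"
  shows "\<not> nonconstant Psi"
proof
  assume "nonconstant Psi"
  then obtain k where "(0::complex) = - of_nat ((k + 1) * (k + 2))"
    using nonconstant_solution_resonant[OF assms] by blast
  then show False by (simp only: neg_0_equal_iff_equal of_nat_0_eq_iff) simp
qed

lemma eigenspace_simple:
  assumes "0 \<le> \<epsilon>" "\<epsilon> < 2" and s0: "solves \<epsilon> \<mu> Psi0" and "nonconstant Psi0" and s: "solves \<epsilon> \<mu> Psi"
  shows "\<exists>a c. \<forall>x\<in>{-1<..<1}. Psi x = a * Psi0 x + c"
proof -
  have c: "0 \<le> \<epsilon> / 2" "\<epsilon> / 2 < 1" using assms by auto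
  obtain k where k: "\<mu> = - of_nat ((k + 1) * (k + 2))"
    using nonconstant_solution_resonant[OF assms(1-4)] by blast
  obtain dPsi0 Phi0 dPhi0 where sol0: "flux_solution (\<epsilon> / 2) \<mu> (\<lambda>x. of_real (1 - x\<^sup>2) * dPsi0 x)
      Phi0 dPhi0"
    and d0: "\<And>x. x \<in> {-1<..<1} \<Longrightarrow> (Psi0 has_vector_derivative dPsi0 x) (at x)"
    using solves_imp_flux_solution[OF s0] by blast
  obtain dPsi Phi dPhi where sol: "flux_solution (\<epsilon> / 2) \<mu> (\<lambda>x. of_real (1 - x\<^sup>2) * dPsi x) Phi dPhi"
    and d: "\<And>x. x \<in> {-1<..<1} \<Longrightarrow> (Psi has_vector_derivative dPsi x) (at x)"
    using solves_imp_flux_solution[OF s] by blast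
  define w0 where "w0 x = of_real (1 - x\<^sup>2) * dPsi0 x" for x
  define w where "w x = of_real (1 - x\<^sup>2) * dPsi x" for x
  note sol0 = sol0[folded w0_def] and sol = sol[folded w_def]
  have "moment w0 k \<noteq> 0"
  proof
    assume "moment w0 k = 0"
    then have "w0 x = 0" if "x \<in> {-1<..<1}" for x
      using flux_solution_eq_0_if_moment_eq_0[OF sol0 c k _ that] by blast
    then show False using constant_if_flux_eq_0[OF d0] \<open>nonconstant Psi0\<close> by (simp add: w0_def)
  qed
  define a where "a = moment w k / moment w0 k"
  have "moment (\<lambda>x. w x - a * w0 x) k = moment w k - a * moment w0 k"
    by (rule moment_diff[OF sol sol0])
  also have "\<dots> = 0" using \<open>moment w0 k \<noteq> 0\<close> by (simp add: a_def)
  finally have "w x - a * w0 x = 0" if "x \<in> {-1<..<1}" for x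
    using flux_solution_eq_0_if_moment_eq_0[OF flux_solution_diff[OF sol sol0] c k _ that] by blast
  then have "of_real (1 - x\<^sup>2) * dPsi x = a * (of_real (1 - x\<^sup>2) * dPsi0 x)" if "x \<in> {-1<..<1}" for x
    using that unfolding w_def w0_def by (simp only: right_minus_eq)
  then show ?thesis using affine_if_flux_eq[OF d d0] by blast
qed

lemma eigenvalue_iff:
  assumes "0 \<le> \<epsilon>" "\<epsilon> < 2"
  shows "eigenvalue \<epsilon> \<mu> \<longleftrightarrow> (\<exists>n. \<mu> = - of_nat (n * (n + 1)))"
proof
  assume "eigenvalue \<epsilon> \<mu>"
  then consider "\<mu> = 0" | Psi where "solves \<epsilon> \<mu> Psi" "nonconstant Psi"
    unfolding eigenvalue_def by blast
  then show "\<exists>n. \<mu> = - of_nat (n * (n + 1))"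
  proof cases
    case 2
    then obtain k where "\<mu> = - of_nat ((k + 1) * (k + 2))"
      using nonconstant_solution_resonant[OF assms] by blast
    then have "\<mu> = - of_nat ((k + 1) * ((k + 1) + 1))" by (simp add: algebra_simps)
    then show ?thesis by blast
  qed (intro exI[of _ 0]; simp)
next
  assume "\<exists>n. \<mu> = - of_nat (n * (n + 1))"
  then obtain n where n: "\<mu> = - of_nat (n * (n + 1))" by blast
  show "eigenvalue \<epsilon> \<mu>"
  proof (cases "n = 0")
    case False
    then obtain Psi where "solves \<epsilon> \<mu> Psi" "nonconstant Psi"
      using eigenfunction_exists[OF assms, of n] n by auto
    then show ?thesis by (auto simp: eigenvalue_def)
  qed (simp add: n eigenvalue_def)
qed

theorem proposition8:
  fixes \<epsilon> :: real
  assumes "\<epsilon> \<ge> 0"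
  shows "(\<epsilon> < 2 \<longrightarrow>
            {\<mu>. eigenvalue \<epsilon> \<mu>} = {- of_nat (n * (n + 1)) | n::nat. True} \<and>
            (\<forall>n::nat. n \<ge> 1 \<longrightarrow>
               (\<exists>Psi0. solves \<epsilon> (- of_nat (n * (n + 1))) Psi0 \<and> nonconstant Psi0 \<and>
                  (\<forall>Psi. solves \<epsilon> (- of_nat (n * (n + 1))) Psi \<longrightarrow>
                     (\<exists>a c. \<forall>x\<in>{-1<..<1::real}. Psi x = a * Psi0 x + c)))) \<and>
            (\<forall>Psi. solves \<epsilon> 0 Psi \<longrightarrow> \<not> nonconstant Psi))
       \<and> (\<epsilon> \<ge> 2 \<longrightarrow> (\<forall>\<mu>. eigenvalue \<epsilon> \<mu> \<longrightarrow> \<mu> = 0))"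
proof (intro conjI impI allI)
  assume "\<epsilon> < 2"
  then show "{\<mu>. eigenvalue \<epsilon> \<mu>} = {- of_nat (n * (n + 1)) | n::nat. True}"
    using eigenvalue_iff[OF assms] by auto
next
  fix n :: nat assume "\<epsilon> < 2" "n \<ge> 1"
  then obtain Psi0 where "solves \<epsilon> (- of_nat (n * (n + 1))) Psi0" "nonconstant Psi0"
    using eigenfunction_exists[OF assms] by blast
  then show "\<exists>Psi0. solves \<epsilon> (- of_nat (n * (n + 1))) Psi0 \<and> nonconstant Psi0 \<and>
      (\<forall>Psi. solves \<epsilon> (- of_nat (n * (n + 1))) Psi \<longrightarrow> (\<exists>a c. \<forall>x\<in>{-1<..<1}. Psi x = a * Psi0 x + c))"
    using eigenspace_simple[OF assms \<open>\<epsilon> < 2\<close>] by blast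
next
  fix Psi assume "\<epsilon> < 2" "solves \<epsilon> 0 Psi"
  then show "\<not> nonconstant Psi" using solution_constant_mu_0[OF assms] by blast
next
  fix \<mu> assume "\<epsilon> \<ge> 2" "eigenvalue \<epsilon> \<mu>"
  then show "\<mu> = 0" using solution_constant_large_eps by (auto simp: eigenvalue_def)
qed

end
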